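(* Let $f:\mathbb{R}^n\to\mathbb{R}$, $g:\mathbb{R}^m\to\mathbb{R}$, $Q:\mathbb{R}^n\times\mathbb{R}^m\to\mathbb{R}\cup\{+\infty\}$ and $L(x,y)=f(x)+Q(x,y)+g(y)$ satisfy: (A1) $L$ is bounded below; $f,g$ are continuously differentiable with $\nabla f$, $\nabla g$ Lipschitz continuous with constants $L_{\nabla f}$, $L_{\nabla g}$; $Q$ is proper and lower semicontinuous; $\phi_1:\mathbb{R}^n\to\mathbb{R}$, $\phi_2:\mathbb{R}^m\to\mathbb{R}$ are differentiable, $\phi_i$ is $\theta_i$-strongly convex with $\theta_1>L_{\nabla f}$, $\theta_2>L_{\nabla g}$, and $\nabla\phi_i$ is $\eta_i$-Lipschitz continuous ($i=1,2$); (A2) $L$ is coercive and $\mathrm{dom}\,Q$ is closed; for all $(x,y)\in\mathrm{dom}\,Q$, $\partial_xQ(x,y)\times\partial_yQ(x,y)\subset\partial Q(x,y)$; and $Q(x,y)=q(x,y)+h(x)$, where $h:\mathbb{R}^n\to\mathbb{R}\cup\{+\infty\}$ is continuous on its domain, $q$ is continuous on $\mathrm{dom}\,Q$, for every $y$ the partial function $q(\cdot,y)$ is continuously differentiable, and for each bounded subset $D_1\times D_2\subset\mathrm{dom}\,Q$ there exists $\xi>0$ such that $\|\nabla_xq(\bar x,y)-\nabla_xq(\bar x,\bar y)\|\le\xi\|y-\bar y\|$ for all $\bar x\in D_1$, $y,\bar y\in D_2$. Assume moreover that $L$ is a Kurdyka–Łojasiewicz (KŁ) function. Let $z_k=(x_k,y_k)$,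 together with $(\hat x_k,\hat y_k)$, be generated by the following algorithm with initial point $z_0=(x_0,y_0)$: set $(\hat x_0,\hat y_0)=(x_0,y_0)$, choose $\alpha_{\max},\beta_{\max}\ge0$ with $\alpha_{\max}+\beta_{\max}<1$ and $\alpha_k\in[0,\alpha_{\max}]$, $\beta_k\in[0,\beta_{\max}]$; for $k=0,1,\dots$: 1. $x_{k+1}\in\arg\min_{x}\{Q(x,\hat y_k)+\langle\nabla f(\hat x_k),x\rangle+D_{\phi_1}(x,\hat x_k)\}$, $y_{k+1}\in\arg\min_{y}\{Q(x_{k+1},y)+\langle\nabla g(\hat y_k),y\rangle+D_{\phi_2}(y,\hat y_k)\}$; 2. $u_{k+1}=x_{k+1}+\alpha_k(x_{k+1}-x_k)+\beta_k(x_k-x_{k-1})$, $v_{k+1}=y_{k+1}+\alpha_k(y_{k+1}-y_k)+\beta_k(y_k-y_{k-1})$; 3. if $L(u_{k+1},v_{k+1})\le L(x_{k+1},y_{k+1})$ then $(\hat x_{k+1},\hat y_{k+1})=(u_{k+1},v_{k+1})$, else $(\hat x_{k+1},\hat y_{k+1})=(x_{k+1},y_{k+1})$. Then (i) $\sum_{k=0}^\infty\|z_{k+1}-z_k\|<\infty$, and (ii) the sequence $\{z_k\}$ converges to a critical point of $L$.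
   Context: For a convex differentiable $\phi$, $D_\phi(x,y)=\phi(x)-\phi(y)-\langle\nabla\phi(y),x-y\rangle$ (Bregman distance). $\phi$ is $\theta$-strongly convex if $\phi-\frac\theta2\|\cdot\|^2$ is convex. For a proper lsc $F$, the Fréchet subdifferential $\hat\partial F(x)$ is the set of $v$ with $\liminf_{y\to x}\frac{F(y)-F(x)-\langle v,y-x\rangle}{\|y-x\|}\ge0$ (empty if $x\notin\mathrm{dom}F$), and the (limiting) subdifferential is $\partial F(x)=\{v:\exists x_k\to x, F(x_k)\to F(x), v_k\in\hat\partial F(x_k), v_k\to v\}$; $\partial_xQ$, $\partial_yQ$ are the limiting subdifferentials of the partial functions. A critical point of $L$ is $z$ with $0\in\partial L(z)$. A proper lsc $F$ has the KŁ property at $x^\ast\in\mathrm{dom}\,F$ if there exist $\eta\in(0,+\infty]$, a neighborhood $U$ of $x^\ast$ and a continuous concave $\varphi:[0,\eta)\to\mathbb{R}_+$ with $\varphi(0)=0$, $\varphi$ $C^1$ on $(0,\eta)$, $\varphi'>0$ on $(0,\eta)$, such that $\varphi'(F(x)-F(x^\ast))\,\mathrm{dist}(0,\partial F(x))\ge1$ for all $x\in U$ with $F(x^\ast)<F(x)<F(x^\ast)+\eta$; $F$ is a KŁ function if it has the KŁ property at every point of its domain. $(x_{-1},y_{-1})$ in step 2 is a given initial point (e.g. $(x_0,y_0)$). *)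

theory Defs
  imports "HOL-Analysis.Analysis"
begin

definition edom :: "('a \<Rightarrow> ereal) \<Rightarrow> 'a set" where
  "edom F = {x. F x \<noteq> \<infinity>}"

definition proper_fun :: "('a \<Rightarrow> ereal) \<Rightarrow> bool" where
  "proper_fun F \<longleftrightarrow> (\<forall>x. F x \<noteq> -\<infinity>) \<and> (\<exists>x. F x \<noteq> \<infinity>)"

definition lsc :: "('a::topological_space \<Rightarrow> ereal) \<Rightarrow> bool" where
  "lsc F \<longleftrightarrow> (\<forall>x. F x \<le> Liminf (at x) F)"

definition coercive :: "('a::real_normed_vector \<Rightarrow> ereal) \<Rightarrow> bool" where
  "coercive F \<longleftrightarrow> (F \<longlongrightarrow> \<infinity>) at_infinity"

definition bounded_below_fun :: "('a \<Rightarrow> ereal) \<Rightarrow> bool" where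
  "bounded_below_fun F \<longleftrightarrow> (\<exists>c::real. \<forall>x. ereal c \<le> F x)"

definition bregman :: "('a::real_inner \<Rightarrow> real) \<Rightarrow> ('a \<Rightarrow> 'a) \<Rightarrow> 'a \<Rightarrow> 'a \<Rightarrow> real" where
  "bregman phi dphi x y = phi x - phi y - dphi y \<bullet> (x - y)"

definition strongly_convex :: "real \<Rightarrow> ('a::real_normed_vector \<Rightarrow> real) \<Rightarrow> bool" where
  "strongly_convex \<theta> phi \<longleftrightarrow> convex_on UNIV (\<lambda>x. phi x - \<theta> / 2 * (norm x)\<^sup>2)"

definition frechet_subdiff :: "('a::real_inner \<Rightarrow> ereal) \<Rightarrow> 'a \<Rightarrow> 'a set" where
  "frechet_subdiff F x =
     (if x \<in> edom F then
        {v. 0 \<le> Liminf (at x) (\<lambda>y. (F y - F x - ereal (v \<bullet> (y - x))) / ereal (norm (y - x)))}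
      else {})"

definition lim_subdiff :: "('a::real_inner \<Rightarrow> ereal) \<Rightarrow> 'a \<Rightarrow> 'a set" where
  "lim_subdiff F x =
     {v. \<exists>X V. X \<longlonglongrightarrow> x \<and> (\<lambda>k. F (X k)) \<longlonglongrightarrow> F x \<and>
              (\<forall>k. V k \<in> frechet_subdiff F (X k)) \<and> V \<longlonglongrightarrow> v}"

text \<open>Kurdyka-Lojasiewicz property. The convention dist(0, empty set) = +\<infinity>
  is encoded by requiring the inequality only when the subdifferential is nonempty.\<close>
definition KL_at :: "('a::real_inner \<Rightarrow> ereal) \<Rightarrow> 'a \<Rightarrow> bool" where
  "KL_at F xs \<longleftrightarrow> xs \<in> edom F \<and>
     (\<exists>(\<eta>::ereal) U \<phi> \<phi>'. 0 < \<eta> \<and> open U \<and> xs \<in> U \<and>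
        continuous_on {s. 0 \<le> s \<and> ereal s < \<eta>} \<phi> \<and>
        concave_on {s. 0 \<le> s \<and> ereal s < \<eta>} \<phi> \<and>
        (\<forall>s. 0 \<le> s \<and> ereal s < \<eta> \<longrightarrow> 0 \<le> \<phi> s) \<and>
        \<phi> 0 = 0 \<and>
        (\<forall>s. 0 < s \<and> ereal s < \<eta> \<longrightarrow> (\<phi> has_real_derivative \<phi>' s) (at s) \<and> 0 < \<phi>' s) \<and>
        continuous_on {s. 0 < s \<and> ereal s < \<eta>} \<phi>' \<and>
        (\<forall>x\<in>U. F xs < F x \<and> F x < F xs + \<eta> \<longrightarrow>
            lim_subdiff F x \<noteq> {} \<longrightarrow>
            \<phi>' (real_of_ereal (F x - F xs)) * infdist 0 (lim_subdiff F x) \<ge> 1))"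

definition KL_function :: "('a::real_inner \<Rightarrow> ereal) \<Rightarrow> bool" where
  "KL_function F \<longleftrightarrow> (\<forall>x\<in>edom F. KL_at F x)"

definition critical_point :: "('a::real_inner \<Rightarrow> ereal) \<Rightarrow> 'a \<Rightarrow> bool" where
  "critical_point F z \<longleftrightarrow> 0 \<in> lim_subdiff F z"

end

(*
  Each proximal Bregman step decreases L by c ||z(k+1) - zh(k)||^2 (descent lemma for the Lipschitz
  gradients plus strong convexity of the Bregman kernels), and an extrapolated point is accepted
  only if it does not increase L; hence L(z k) decreases and the gaps ||z(k+1) - zh(k)|| are square
  summable. Optimality of the two partial minimisations gives a limiting subgradient of L at
  z(k+1) of norm at most b ||z(k+1) - zh(k)||. Because alpha_max + beta_max < 1, the step lengths
  ||z(k+1) - z(k)|| obey a contracting linear recursion driven by the gaps.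

  At a cluster point, concavity of the desingularising function turns the KL inequality into
  2 d(n) \<le> d(n-1) + (b/c) (\<phi>(L(z n) - v) - \<phi>(L(z(n+1)) - v)) for the gaps d, where v is the
  limit of the values; this telescopes. Once the iterates are close enough to the cluster point,
  it bounds the length of the tail, so they never leave the KL neighbourhood, the total length is
  finite, and the whole sequence converges; its limit is critical by closedness of the limiting
  subdifferential.
*)

theory Submission
  imports Defs
begin

section \<open>Frechet and limiting subdifferentials\<close>

lemma frechet_quotient_ge_iff:
  fixes F :: "'a::real_inner \<Rightarrow> ereal"
  assumes Fx: "F x = ereal c" and "y \<noteq> x"
  shows "ereal (- e) \<le> (F y - F x - ereal (v \<bullet> (y - x))) / ereal (norm (y - x)) \<longleftrightarrow>
         ereal (c + v \<bullet> (y - x) - e * norm (y - x)) \<le> F y"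
proof (cases "F y")
  case (real r)
  have "0 < norm (y - x)" using \<open>y \<noteq> x\<close> by simp
  then show ?thesis using Fx real by (simp add: pos_le_divide_eq algebra_simps)
qed (use assms in \<open>simp_all add: ereal_divide_eq\<close>)

lemma frechet_subdiff_iff:
  fixes F :: "'a::real_inner \<Rightarrow> ereal"
  assumes Fx: "F x = ereal c"
  shows "v \<in> frechet_subdiff F x \<longleftrightarrow>
     (\<forall>e>0. \<forall>\<^sub>F y in at x. ereal (c + v \<bullet> (y - x) - e * norm (y - x)) \<le> F y)"
proof -
  let ?q = "\<lambda>y. (F y - F x - ereal (v \<bullet> (y - x))) / ereal (norm (y - x))"
  have "v \<in> frechet_subdiff F x \<longleftrightarrow> (\<forall>y0<0. \<forall>\<^sub>F y in at x. y0 < ?q y)"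
    using Fx by (simp add: frechet_subdiff_def edom_def le_Liminf_iff)
  also have "\<dots> \<longleftrightarrow> (\<forall>e>0. \<forall>\<^sub>F y in at x. ereal (- e) \<le> ?q y)"
  proof safe
    fix e :: real
    assume "\<forall>y0<0. \<forall>\<^sub>F y in at x. y0 < ?q y" and "0 < e"
    then have "\<forall>\<^sub>F y in at x. ereal (- e) < ?q y" by simp
    then show "\<forall>\<^sub>F y in at x. ereal (- e) \<le> ?q y"
      by eventually_elim (rule less_imp_le)
  next
    fix y0 :: ereal
    assume H: "\<forall>e>0. \<forall>\<^sub>F y in at x. ereal (- e) \<le> ?q y" and "y0 < 0"
    then obtain s where s: "y0 < ereal s" "ereal s < 0" using ereal_dense2 by blast
    then have "\<forall>\<^sub>F y in at x. ereal s \<le> ?q y" using H[rule_format, of "- s"] by simp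
    then show "\<forall>\<^sub>F y in at x. y0 < ?q y"
      by eventually_elim (rule less_le_trans[OF s(1)])
  qed
  also have "\<dots> \<longleftrightarrow> (\<forall>e>0. \<forall>\<^sub>F y in at x. ereal (c + v \<bullet> (y - x) - e * norm (y - x)) \<le> F y)"
  proof (intro all_cong1 imp_cong refl eventually_subst)
    show "\<forall>\<^sub>F y in at x. (ereal (- e) \<le> ?q y) =
        (ereal (c + v \<bullet> (y - x) - e * norm (y - x)) \<le> F y)" for e
      using eventually_neq_at_within[of x x UNIV]
      by eventually_elim (rule frechet_quotient_ge_iff[of F x c, OF Fx])
  qed
  finally show ?thesis .
qed

lemma frechet_subdiff_add_smooth:
  fixes F :: "'a::real_inner \<Rightarrow> ereal"
  assumes v: "v \<in> frechet_subdiff F x" and "F x \<noteq> -\<infinity>"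
    and s: "(s has_derivative (\<lambda>d. ds \<bullet> d)) (at x)"
  shows "v + ds \<in> frechet_subdiff (\<lambda>u. F u + ereal (s u)) x"
proof -
  obtain c where c: "F x = ereal c"
    using v \<open>F x \<noteq> -\<infinity>\<close> by (cases "F x") (auto simp: frechet_subdiff_def edom_def)
  have F: "\<forall>e>0. \<forall>\<^sub>F y in at x. ereal (c + v \<bullet> (y - x) - e * norm (y - x)) \<le> F y"
    using v frechet_subdiff_iff[of F x c, OF c] by simp
  have "v + ds \<in> frechet_subdiff (\<lambda>u. F u + ereal (s u)) x" if "F x + ereal (s x) = ereal (c + s x)"
    unfolding frechet_subdiff_iff[of "\<lambda>u. F u + ereal (s u)" x "c + s x", OF that]
  proof (intro allI impI)
    fix e :: real
    assume "0 < e"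
    have "\<forall>\<^sub>F y in at x. ereal (c + v \<bullet> (y - x) - e/2 * norm (y - x)) \<le> F y"
      using F[rule_format, of "e/2"] \<open>0 < e\<close> by simp
    moreover have "\<forall>\<^sub>F y in at x. norm (s y - s x - ds \<bullet> (y - x)) \<le> e/2 * norm (y - x)"
      using conjunct2[OF s[unfolded has_derivative_within_alt2], rule_format, of "e/2"] \<open>0 < e\<close>
      by simp
    ultimately show "\<forall>\<^sub>F y in at x.
        ereal (c + s x + (v + ds) \<bullet> (y - x) - e * norm (y - x)) \<le> F y + ereal (s y)"
    proof eventually_elim
      case (elim y)
      then show ?case
        using abs_ge_minus_self[of "s y - s x - ds \<bullet> (y - x)"]
        by (cases "F y") (auto simp: inner_add_left)
    qed
  qed
  then show ?thesis using c by simp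
qed

lemma frechet_subdiff_diff_smooth:
  fixes F :: "'a::real_inner \<Rightarrow> ereal"
  assumes v: "v \<in> frechet_subdiff (\<lambda>u. F u + ereal (s u)) x" and F: "\<And>u. F u \<noteq> -\<infinity>"
    and s: "(s has_derivative (\<lambda>d. ds \<bullet> d)) (at x)"
  shows "v - ds \<in> frechet_subdiff F x"
proof -
  have "((\<lambda>u. - s u) has_derivative (\<lambda>d. (- ds) \<bullet> d)) (at x)"
    using has_derivative_minus[OF s] by simp
  moreover have "F x + ereal (s x) \<noteq> -\<infinity>" using F[of x] by (cases "F x") auto
  ultimately have "v + - ds \<in> frechet_subdiff (\<lambda>u. F u + ereal (s u) + ereal (- s u)) x"
    by (intro frechet_subdiff_add_smooth v)
  moreover have "(\<lambda>u. F u + ereal (s u) + ereal (- s u)) = F"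
  proof
    show "F u + ereal (s u) + ereal (- s u) = F u" for u using F[of u] by (cases "F u") auto
  qed
  ultimately show ?thesis by simp
qed

lemma frechet_subdiff_change_smooth:
  fixes h :: "'a::real_inner \<Rightarrow> ereal"
  assumes v: "v \<in> frechet_subdiff (\<lambda>u. h u + ereal (s1 u)) x" and h: "\<And>u. h u \<noteq> -\<infinity>"
    and s1: "(s1 has_derivative (\<lambda>d. ds1 \<bullet> d)) (at x)"
    and s2: "(s2 has_derivative (\<lambda>d. ds2 \<bullet> d)) (at x)"
  shows "v - ds1 + ds2 \<in> frechet_subdiff (\<lambda>u. h u + ereal (s2 u)) x"
  using frechet_subdiff_add_smooth[OF frechet_subdiff_diff_smooth[OF v h s1] h s2] .

lemma frechet_subdiff_arg_min:
  fixes F :: "'a::real_inner \<Rightarrow> ereal"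
  assumes min: "is_arg_min F (\<lambda>_. True) x" and Fx: "F x = ereal c"
  shows "0 \<in> frechet_subdiff F x"
  unfolding frechet_subdiff_iff[of F x c, OF Fx]
proof (intro allI impI always_eventually)
  fix e :: real and y
  assume "0 < e"
  then have "ereal (c + 0 \<bullet> (y - x) - e * norm (y - x)) \<le> F x" using Fx by simp
  also have "F x \<le> F y" using min by (simp add: is_arg_min_def not_less)
  finally show "ereal (c + 0 \<bullet> (y - x) - e * norm (y - x)) \<le> F y" .
qed

lemma frechet_subdiff_imp_lim_subdiff: "v \<in> frechet_subdiff F x \<Longrightarrow> v \<in> lim_subdiff F x"
  unfolding lim_subdiff_def by (rule CollectI, rule exI[of _ "\<lambda>_. x"], rule exI[of _ "\<lambda>_. v"]) auto

lemma lim_subdiff_add_smooth: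
  fixes F :: "'a::real_inner \<Rightarrow> ereal"
  assumes v: "v \<in> lim_subdiff F x" and F: "\<And>u. F u \<noteq> -\<infinity>"
    and s: "\<And>u. (s has_derivative (\<lambda>d. ds u \<bullet> d)) (at u)" and ds: "continuous_on UNIV ds"
  shows "v + ds x \<in> lim_subdiff (\<lambda>u. F u + ereal (s u)) x"
proof -
  obtain X V where X: "X \<longlonglongrightarrow> x" and FX: "(\<lambda>k. F (X k)) \<longlonglongrightarrow> F x"
    and V: "\<And>k. V k \<in> frechet_subdiff F (X k)" and "V \<longlonglongrightarrow> v"
    using v unfolding lim_subdiff_def by blast
  have "continuous_on UNIV s"
    using s by (meson continuous_at_imp_continuous_on has_derivative_continuous)
  then have "(\<lambda>k. s (X k)) \<longlonglongrightarrow> s x"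
    using continuous_on_tendsto_compose[OF _ X] by fastforce
  then have FsX: "(\<lambda>k. F (X k) + ereal (s (X k))) \<longlonglongrightarrow> F x + ereal (s x)"
    by (intro tendsto_add_ereal_nonneg FX F tendsto_ereal) auto
  have "(\<lambda>k. ds (X k)) \<longlonglongrightarrow> ds x"
    using continuous_on_tendsto_compose[OF ds X] by simp
  then have VdsX: "(\<lambda>k. V k + ds (X k)) \<longlonglongrightarrow> v + ds x"
    by (intro tendsto_add \<open>V \<longlonglongrightarrow> v\<close>)
  have "V k + ds (X k) \<in> frechet_subdiff (\<lambda>u. F u + ereal (s u)) (X k)" for k
    by (rule frechet_subdiff_add_smooth[OF V F s])
  with X FsX VdsX show ?thesis
    unfolding lim_subdiff_def by fastforce
qed

lemma LIMSEQ_dist_less_inverse: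
  fixes X P :: "nat \<Rightarrow> 'a::metric_space"
  assumes "X \<longlonglongrightarrow> x" and "\<And>k. dist (P k) (X k) < inverse (real (Suc k))"
  shows "P \<longlonglongrightarrow> x"
  unfolding tendsto_iff
proof (intro allI impI)
  fix e :: real
  assume "0 < e"
  then have "\<forall>\<^sub>F k in sequentially. dist (X k) x < e/2"
    using assms(1) unfolding tendsto_iff by (meson half_gt_zero)
  moreover have "\<forall>\<^sub>F k in sequentially. inverse (real (Suc k)) < e/2"
    using LIMSEQ_inverse_real_of_nat \<open>0 < e\<close> by (intro order_tendstoD) auto
  ultimately show "\<forall>\<^sub>F k in sequentially. dist (P k) x < e"
  proof eventually_elim
    case (elim k)
    then show ?case using assms(2)[of k] dist_triangle[of "P k" x "X k"] by linarith
  qed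
qed

text \<open>Diagonal argument: for each \<open>k\<close> pick one Frechet pair within \<open>1 / (k + 1)\<close> of
  \<open>(X k, V k)\<close>, with value within \<open>1 / (k + 1)\<close> of \<open>G k\<close>.\<close>

lemma lim_subdiff_closed:
  fixes F :: "'a::real_inner \<Rightarrow> ereal"
  assumes X: "X \<longlonglongrightarrow> x" and G: "\<And>k. F (X k) = ereal (G k)" and Fx: "F x = ereal c"
    and "G \<longlonglongrightarrow> c"
    and V: "\<And>k. V k \<in> lim_subdiff F (X k)" and "V \<longlonglongrightarrow> v"
  shows "v \<in> lim_subdiff F x"
proof -
  have "\<exists>p w r. dist p (X k) < inverse (real (Suc k)) \<and> dist w (V k) < inverse (real (Suc k)) \<and>
          w \<in> frechet_subdiff F p \<and> F p = ereal r \<and> dist r (G k) < inverse (real (Suc k))" for k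
  proof -
    let ?\<delta> = "inverse (real (Suc k))"
    have \<delta>: "?\<delta> > 0" by simp
    obtain X' V' where X': "X' \<longlonglongrightarrow> X k" "(\<lambda>j. F (X' j)) \<longlonglongrightarrow> ereal (G k)"
      and V': "\<And>j. V' j \<in> frechet_subdiff F (X' j)" "V' \<longlonglongrightarrow> V k"
      using V[of k] G[of k] unfolding lim_subdiff_def by auto
    have "\<forall>\<^sub>F j in sequentially. dist (X' j) (X k) < ?\<delta>"
      using X'(1) \<delta> unfolding tendsto_iff by blast
    moreover have "\<forall>\<^sub>F j in sequentially. dist (V' j) (V k) < ?\<delta>"
      using V'(2) \<delta> unfolding tendsto_iff by blast
    moreover have "\<forall>\<^sub>F j in sequentially. ereal (G k - ?\<delta>) < F (X' j)"
      using X'(2) \<delta> by (intro order_tendstoD) auto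
    moreover have "\<forall>\<^sub>F j in sequentially. F (X' j) < ereal (G k + ?\<delta>)"
      using X'(2) \<delta> by (intro order_tendstoD) auto
    ultimately have "\<forall>\<^sub>F j in sequentially. dist (X' j) (X k) < ?\<delta> \<and> dist (V' j) (V k) < ?\<delta> \<and>
          ereal (G k - ?\<delta>) < F (X' j) \<and> F (X' j) < ereal (G k + ?\<delta>)"
      by eventually_elim auto
    then obtain j where j: "dist (X' j) (X k) < ?\<delta>" "dist (V' j) (V k) < ?\<delta>"
      "ereal (G k - ?\<delta>) < F (X' j)" "F (X' j) < ereal (G k + ?\<delta>)"
      unfolding eventually_sequentially by blast
    then obtain r where "F (X' j) = ereal r" by (cases "F (X' j)") auto
    with j V'(1)[of j] show ?thesis
      by (intro exI[of _ "X' j"] exI[of _ "V' j"] exI[of _ r]) (auto simp: dist_real_def abs_less_iff)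
  qed
  then obtain P W R where PWR: "\<And>k. dist (P k) (X k) < inverse (real (Suc k))"
    "\<And>k. dist (W k) (V k) < inverse (real (Suc k))" "\<And>k. W k \<in> frechet_subdiff F (P k)"
    "\<And>k. F (P k) = ereal (R k)" "\<And>k. dist (R k) (G k) < inverse (real (Suc k))"
    by metis
  have "P \<longlonglongrightarrow> x" "W \<longlonglongrightarrow> v" "R \<longlonglongrightarrow> c"
    using LIMSEQ_dist_less_inverse PWR assms by blast+
  moreover from \<open>R \<longlonglongrightarrow> c\<close> have "(\<lambda>k. F (P k)) \<longlonglongrightarrow> F x"
    unfolding PWR(4) Fx by simp
  ultimately show ?thesis
    using PWR(3) unfolding lim_subdiff_def by blast
qed

section \<open>Smooth functions, Bregman distances and proximal steps\<close>

lemma has_real_derivative_along_line: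
  fixes f :: "'a::real_inner \<Rightarrow> real"
  assumes "\<And>u. (f has_derivative (\<lambda>d. df u \<bullet> d)) (at u)"
  shows "((\<lambda>t. f (y + t *\<^sub>R d)) has_real_derivative (df (y + t *\<^sub>R d) \<bullet> d)) (at t)"
proof -
  have "((\<lambda>t. y + t *\<^sub>R d) has_derivative (\<lambda>h. h *\<^sub>R d)) (at t)"
    by (auto intro!: derivative_eq_intros)
  from has_derivative_compose[OF this assms]
  have "((\<lambda>t. f (y + t *\<^sub>R d)) has_derivative (\<lambda>h. df (y + t *\<^sub>R d) \<bullet> (h *\<^sub>R d))) (at t)"
    by (simp add: o_def)
  then show ?thesis
    unfolding has_field_derivative_def by (rule has_derivative_eq_rhs) (auto simp: fun_eq_iff)
qed

lemma lipschitz_gradient_upper_bound: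
  fixes f :: "'a::real_inner \<Rightarrow> real"
  assumes f: "\<And>u. (f has_derivative (\<lambda>d. df u \<bullet> d)) (at u)" and df: "Lf-lipschitz_on UNIV df"
  shows "f x \<le> f y + df y \<bullet> (x - y) + Lf / 2 * (norm (x - y))\<^sup>2"
proof -
  define d where "d = x - y"
  define \<phi> where "\<phi> t = f (y + t *\<^sub>R d) - t * (df y \<bullet> d) - Lf / 2 * t\<^sup>2 * (norm d)\<^sup>2" for t
  have \<phi>': "(\<phi> has_real_derivative (df (y + t *\<^sub>R d) \<bullet> d - df y \<bullet> d - Lf * t * (norm d)\<^sup>2)) (at t)" for t
    unfolding \<phi>_def by (rule has_real_derivative_along_line[OF f] derivative_eq_intros refl | simp)+
  have "\<phi> 1 \<le> \<phi> 0"
  proof (rule DERIV_nonpos_imp_nonincreasing[of 0 1 \<phi>])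
    fix t :: real
    assume t: "0 \<le> t" "t \<le> 1"
    have "df (y + t *\<^sub>R d) \<bullet> d - df y \<bullet> d \<le> norm (df (y + t *\<^sub>R d) - df y) * norm d"
      by (metis inner_diff_left norm_cauchy_schwarz)
    also have "\<dots> \<le> (Lf * norm (t *\<^sub>R d)) * norm d"
      using lipschitz_on_normD[OF df, of "y + t *\<^sub>R d" y] by (intro mult_right_mono) auto
    also have "\<dots> = Lf * t * (norm d)\<^sup>2" using t by (simp add: power2_eq_square)
    finally show "\<exists>y. (\<phi> has_real_derivative y) (at t) \<and> y \<le> 0" using \<phi>'[of t] by force
  qed simp
  then show ?thesis unfolding \<phi>_def d_def by simp
qed

lemma convex_on_gradient_ineq:
  fixes \<psi> :: "'a::real_inner \<Rightarrow> real"
  assumes convex: "convex_on UNIV \<psi>" and \<psi>: "\<And>u. (\<psi> has_derivative (\<lambda>h. d\<psi> u \<bullet> h)) (at u)"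
  shows "\<psi> y + d\<psi> y \<bullet> (x - y) \<le> \<psi> x"
proof -
  define g where "g t = \<psi> (y + t *\<^sub>R (x - y))" for t
  have "convex_on UNIV g"
  proof (rule convex_onI)
    fix s t u :: real
    assume "0 < u" "u < 1"
    have "y + ((1 - u) * s + u * t) *\<^sub>R (x - y) = (1 - u) *\<^sub>R (y + s *\<^sub>R (x - y)) + u *\<^sub>R (y + t *\<^sub>R (x - y))"
      by (simp add: algebra_simps)
    then show "g ((1 - u) *\<^sub>R s + u *\<^sub>R t) \<le> (1 - u) * g s + u * g t"
      unfolding g_def using convex \<open>0 < u\<close> \<open>u < 1\<close> by (simp add: convex_onD)
  qed simp
  moreover have "(g has_real_derivative (d\<psi> y \<bullet> (x - y))) (at 0 within UNIV)"
    using has_real_derivative_along_line[OF \<psi>, of y "x - y" 0] unfolding g_def by simp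
  ultimately have "g 1 - g 0 \<ge> d\<psi> y \<bullet> (x - y) * (1 - 0)"
    by (intro convex_on_imp_above_tangent) auto
  then show ?thesis unfolding g_def by simp
qed

lemma bregman_ge_strongly_convex:
  fixes phi :: "'a::real_inner \<Rightarrow> real"
  assumes sc: "strongly_convex \<theta> phi" and phi: "\<And>u. (phi has_derivative (\<lambda>h. dphi u \<bullet> h)) (at u)"
  shows "\<theta> / 2 * (norm (x - y))\<^sup>2 \<le> bregman phi dphi x y"
proof -
  define \<psi> where "\<psi> u = phi u - \<theta> / 2 * (norm u)\<^sup>2" for u
  have "((\<lambda>u. (norm u)\<^sup>2) has_derivative (\<lambda>h. (2 *\<^sub>R u) \<bullet> h)) (at u)" for u :: 'a
    unfolding power2_norm_eq_inner
    by (rule has_derivative_eq_rhs[OF has_derivative_inner[OF has_derivative_ident has_derivative_ident]])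
       (auto simp: fun_eq_iff inner_commute)
  then have "(\<psi> has_derivative (\<lambda>h. (dphi u - \<theta> *\<^sub>R u) \<bullet> h)) (at u)" for u
    unfolding \<psi>_def
    by (rule has_derivative_eq_rhs[OF has_derivative_diff[OF phi has_derivative_mult_right]])
       (auto simp: fun_eq_iff inner_diff_left)
  moreover have "convex_on UNIV \<psi>" using sc unfolding strongly_convex_def \<psi>_def by simp
  ultimately have "\<psi> y + (dphi y - \<theta> *\<^sub>R y) \<bullet> (x - y) \<le> \<psi> x"
    by (intro convex_on_gradient_ineq)
  then show ?thesis
    unfolding bregman_def \<psi>_def
    by (simp add: power2_norm_eq_inner inner_diff_left inner_diff_right inner_commute algebra_simps)
qed

lemma bregman_self [simp]: "bregman phi dphi a a = 0"
  by (simp add: bregman_def)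

lemma linear_plus_bregman_has_derivative:
  fixes phi :: "'a::real_inner \<Rightarrow> real"
  assumes "\<And>u. (phi has_derivative (\<lambda>h. dphi u \<bullet> h)) (at u)"
  shows "((\<lambda>u. p \<bullet> u + bregman phi dphi u a) has_derivative (\<lambda>h. (p + dphi u - dphi a) \<bullet> h)) (at u)"
  unfolding bregman_def
  by (rule has_derivative_eq_rhs, (rule derivative_eq_intros assms refl)+)
     (auto simp: fun_eq_iff inner_add_left inner_diff_left)

lemma bregman_prox_step_decrease:
  fixes \<Psi> :: "'a::real_inner \<Rightarrow> ereal"
  assumes f: "\<And>u. (f has_derivative (\<lambda>d. df u \<bullet> d)) (at u)" and df: "Lf-lipschitz_on UNIV df"
    and phi: "\<And>u. (phi has_derivative (\<lambda>d. dphi u \<bullet> d)) (at u)" and sc: "strongly_convex \<theta> phi"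
    and \<Psi>: "\<And>u. \<Psi> u \<noteq> -\<infinity>"
    and min: "is_arg_min (\<lambda>u. \<Psi> u + ereal (df a \<bullet> u) + ereal (bregman phi dphi u a)) (\<lambda>_. True) x1"
  shows "\<Psi> x1 + ereal (f x1 + (\<theta> - Lf) / 2 * (norm (x1 - a))\<^sup>2) \<le> \<Psi> a + ereal (f a)"
proof -
  have "\<not> \<Psi> a + ereal (df a \<bullet> a) + ereal (bregman phi dphi a a) <
      \<Psi> x1 + ereal (df a \<bullet> x1) + ereal (bregman phi dphi x1 a)"
    using min unfolding is_arg_min_def by blast
  moreover have "f x1 + (\<theta> - Lf) / 2 * (norm (x1 - a))\<^sup>2 \<le>
      f a + df a \<bullet> x1 + bregman phi dphi x1 a - df a \<bullet> a"
  proof -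
    have "(\<theta> - Lf) / 2 * (norm (x1 - a))\<^sup>2 = \<theta> / 2 * (norm (x1 - a))\<^sup>2 - Lf / 2 * (norm (x1 - a))\<^sup>2"
      by (simp add: left_diff_distrib diff_divide_distrib)
    then show ?thesis
      using lipschitz_gradient_upper_bound[OF f df, of x1 a] bregman_ge_strongly_convex[OF sc phi, of x1 a]
      unfolding inner_diff_right by linarith
  qed
  ultimately show ?thesis
    using \<Psi>[of x1] \<Psi>[of a] by (cases "\<Psi> a"; cases "\<Psi> x1") auto
qed

lemma bregman_prox_step_subgradient:
  fixes \<Psi> :: "'a::real_inner \<Rightarrow> ereal"
  assumes phi: "\<And>u. (phi has_derivative (\<lambda>d. dphi u \<bullet> d)) (at u)"
    and \<Psi>: "\<And>u. \<Psi> u \<noteq> -\<infinity>" and "\<Psi> x1 \<noteq> \<infinity>"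
    and min: "is_arg_min (\<lambda>u. \<Psi> u + ereal (p \<bullet> u) + ereal (bregman phi dphi u a)) (\<lambda>_. True) x1"
  shows "dphi a - dphi x1 - p \<in> frechet_subdiff \<Psi> x1"
proof -
  obtain r where r: "\<Psi> x1 = ereal r" using \<Psi>[of x1] \<open>\<Psi> x1 \<noteq> \<infinity>\<close> by (cases "\<Psi> x1") auto
  have "0 \<in> frechet_subdiff (\<lambda>u. \<Psi> u + ereal (p \<bullet> u + bregman phi dphi u a)) x1"
    by (rule frechet_subdiff_arg_min[where c = "r + (p \<bullet> x1 + bregman phi dphi x1 a)"])
       (use min r in \<open>simp_all add: add.assoc\<close>)
  from frechet_subdiff_diff_smooth[OF this \<Psi> linear_plus_bregman_has_derivative[OF phi]]
  show ?thesis by (simp add: algebra_simps)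
qed

lemma coercive_bounded_sublevel:
  fixes F :: "'a::real_normed_vector \<Rightarrow> ereal"
  assumes "coercive F" and "C \<noteq> \<infinity>"
  shows "bounded {w. F w \<le> C}"
proof -
  obtain c where "C \<le> ereal c" using \<open>C \<noteq> \<infinity>\<close> by (cases C) auto
  moreover have "\<forall>\<^sub>F w in at_infinity. ereal c < F w"
    using \<open>coercive F\<close> unfolding coercive_def tendsto_PInfty by blast
  then obtain B where B: "\<And>w. B \<le> norm w \<Longrightarrow> ereal c < F w"
    unfolding eventually_at_infinity by blast
  ultimately have "norm w \<le> B" if "F w \<le> C" for w
    using B[of w] that by (metis linorder_not_le nle_le not_less_iff_gr_or_eq order_trans)
  then have "{w. F w \<le> C} \<subseteq> cball 0 B" by auto
  then show ?thesis using bounded_cball bounded_subset by blast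
qed

section \<open>Inertial recursions and telescoping sums\<close>

lemma power2_weighted_sum_le:
  fixes d u v a b :: real
  assumes "0 \<le> a" "0 \<le> b" "a + b < 1"
  shows "(d + a * u + b * v)\<^sup>2 \<le> d\<^sup>2 / (1 - a - b) + a * u\<^sup>2 + b * v\<^sup>2"
proof -
  define w where "w = 1 - a - b"
  define t where "t = d / w"
  have w: "w > 0" using assms unfolding w_def by simp
  then have d: "d = w * t" unfolding t_def by simp
  \<comment> \<open>Jensen's inequality for the square with weights \<open>w, a, b\<close>, as an exact identity\<close>
  have "(w * t + a * u + b * v)\<^sup>2 + (w * a * (t - u)\<^sup>2 + w * b * (t - v)\<^sup>2 + a * b * (u - v)\<^sup>2)
      = w * t\<^sup>2 + a * u\<^sup>2 + b * v\<^sup>2"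
    unfolding w_def by (simp add: power2_eq_square algebra_simps)
  moreover have "0 \<le> w * a * (t - u)\<^sup>2 + w * b * (t - v)\<^sup>2 + a * b * (u - v)\<^sup>2"
    using w assms by (intro add_nonneg_nonneg mult_nonneg_nonneg) auto
  moreover have "(w * t)\<^sup>2 / (1 - a - b) = w * t\<^sup>2"
    using w unfolding w_def[symmetric] by (simp add: power2_eq_square)
  ultimately show ?thesis unfolding d by linarith
qed

lemma inertial_recursion_partial_sums_sq:
  fixes d e :: "nat \<Rightarrow> real" and a b :: real
  assumes e: "\<And>n. 0 \<le> e n"
    and rec: "\<And>n. e (n + 2) \<le> d (n + 2) + a * e (n + 1) + b * e n"
    and ab: "0 \<le> a" "0 \<le> b" "a + b < 1"
  shows "(1 - a - b) * (\<Sum>n<N + 2. (e n)\<^sup>2) \<le> (e 0)\<^sup>2 + (e 1)\<^sup>2 + (\<Sum>n<N + 2. (d n)\<^sup>2) / (1 - a - b)"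
proof -
  let ?S = "\<Sum>n<N + 2. (e n)\<^sup>2"
  have w: "1 - a - b > 0" using ab by simp
  have "(e (n + 2))\<^sup>2 \<le> (d (n + 2))\<^sup>2 / (1 - a - b) + a * (e (n + 1))\<^sup>2 + b * (e n)\<^sup>2" for n
  proof -
    have "(e (n + 2))\<^sup>2 \<le> (d (n + 2) + a * e (n + 1) + b * e n)\<^sup>2"
      using rec[of n] e[of "n + 2"] by (intro power_mono) auto
    also have "\<dots> \<le> (d (n + 2))\<^sup>2 / (1 - a - b) + a * (e (n + 1))\<^sup>2 + b * (e n)\<^sup>2"
      by (rule power2_weighted_sum_le[OF ab])
    finally show ?thesis .
  qed
  then have "(\<Sum>n<N. (e (n + 2))\<^sup>2) \<le>
      (\<Sum>n<N. (d (n + 2))\<^sup>2 / (1 - a - b) + a * (e (n + 1))\<^sup>2 + b * (e n)\<^sup>2)"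
    by (rule sum_mono)
  also have "\<dots> =
      (\<Sum>n<N. (d (n + 2))\<^sup>2) / (1 - a - b) + a * (\<Sum>n<N. (e (n + 1))\<^sup>2) + b * (\<Sum>n<N. (e n)\<^sup>2)"
    by (simp add: sum.distrib sum_distrib_left sum_divide_distrib)
  finally have "(\<Sum>n<N. (e (n + 2))\<^sup>2) \<le> \<dots>" .
  moreover have "(\<Sum>n<N. (d (n + 2))\<^sup>2) / (1 - a - b) \<le> (\<Sum>n<N + 2. (d n)\<^sup>2) / (1 - a - b)"
    using w by (intro divide_right_mono) (simp_all add: sum.lessThan_Suc_shift numeral_2_eq_2 del: sum.lessThan_Suc)
  moreover have "a * (\<Sum>n<N. (e (n + 1))\<^sup>2) \<le> a * ?S"
  proof -
    have "(\<Sum>n<N. (e (n + 1))\<^sup>2) \<le> (\<Sum>n<N + 1. (e n)\<^sup>2)"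
      by (simp add: sum.lessThan_Suc_shift del: sum.lessThan_Suc)
    also have "\<dots> \<le> ?S" by (rule sum_mono2) auto
    finally show ?thesis using ab by (simp add: mult_left_mono)
  qed
  moreover have "b * (\<Sum>n<N. (e n)\<^sup>2) \<le> b * ?S"
    using ab by (intro mult_left_mono sum_mono2) auto
  moreover have "?S = (e 0)\<^sup>2 + (e 1)\<^sup>2 + (\<Sum>n<N. (e (n + 2))\<^sup>2)"
    by (simp add: sum.lessThan_Suc_shift numeral_2_eq_2 del: sum.lessThan_Suc)
  moreover have "(1 - a - b) * ?S = ?S - a * ?S - b * ?S" by (simp add: algebra_simps)
  ultimately show ?thesis by linarith
qed

lemma inertial_recursion_square_summable:
  fixes d e :: "nat \<Rightarrow> real" and a b :: real
  assumes e: "\<And>n. 0 \<le> e n"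
    and rec: "\<And>n. e (n + 2) \<le> d (n + 2) + a * e (n + 1) + b * e n"
    and ab: "0 \<le> a" "0 \<le> b" "a + b < 1"
    and d: "summable (\<lambda>n. (d n)\<^sup>2)"
  shows "summable (\<lambda>n. (e n)\<^sup>2)"
proof (rule summableI_nonneg_bounded)
  fix N
  let ?w = "1 - a - b"
  have w: "?w > 0" using ab by simp
  have "(\<Sum>n<N. (e n)\<^sup>2) \<le> (\<Sum>n<N + 2. (e n)\<^sup>2)" by (rule sum_mono2) auto
  also have "\<dots> \<le> ((e 0)\<^sup>2 + (e 1)\<^sup>2 + (\<Sum>n<N + 2. (d n)\<^sup>2) / ?w) / ?w"
    using inertial_recursion_partial_sums_sq[OF e rec ab, of N] w
    by (simp add: pos_le_divide_eq mult.commute)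
  also have "\<dots> \<le> ((e 0)\<^sup>2 + (e 1)\<^sup>2 + (\<Sum>n. (d n)\<^sup>2) / ?w) / ?w"
    using w sum_le_suminf[OF d, of "{..<N + 2}"] by (simp add: divide_right_mono)
  finally show "(\<Sum>n<N. (e n)\<^sup>2) \<le> ((e 0)\<^sup>2 + (e 1)\<^sup>2 + (\<Sum>n. (d n)\<^sup>2) / ?w) / ?w" .
qed simp

lemma inertial_recursion_sum:
  fixes d e :: "nat \<Rightarrow> real" and a b :: real
  assumes e: "\<And>n. 0 \<le> e n"
    and rec: "\<And>n. e (n + 2) \<le> d (n + 2) + a * e (n + 1) + b * e n"
    and ab: "0 \<le> a" "0 \<le> b"
  shows "(1 - a - b) * (\<Sum>n\<in>{k+2..k+2+m}. e n) + a * e (k+2+m) + b * (e (k+2+m) + e (k+1+m))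
     \<le> (\<Sum>n\<in>{k+2..k+2+m}. d n) + a * e (k+1) + b * (e (k+1) + e k)"
proof (induction m)
  case 0
  show ?case using rec[of k] by (simp add: algebra_simps)
next
  case (Suc m)
  have "e (k+2+Suc m) \<le> d (k+2+Suc m) + a * e (k+2+m) + b * e (k+1+m)"
    using rec[of "k+1+m"] by (simp add: algebra_simps)
  with Suc.IH show ?case by (simp add: add_Suc_right algebra_simps)
qed

lemma telescoping_two_step_sum:
  fixes d p :: "nat \<Rightarrow> real" and M :: real
  assumes "Suc k \<le> N"
    and "\<And>n. Suc k \<le> n \<Longrightarrow> n \<le> N \<Longrightarrow> 2 * d n \<le> d (n - 1) + M * (p n - p (Suc n))"
  shows "(\<Sum>n\<in>{Suc k..N}. d n) + d N \<le> d k + M * (p (Suc k) - p (Suc N))"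
  using assms
proof (induction N rule: dec_induct)
  case base
  then show ?case by simp
next
  case (step N)
  have "2 * d (Suc N) \<le> d N + M * (p (Suc N) - p (Suc (Suc N)))"
    using step.prems[of "Suc N"] step.hyps(1) by simp
  with step show ?case by (simp add: algebra_simps)
qed

lemma concave_on_deriv_le:
  fixes \<phi> \<phi>' :: "real \<Rightarrow> real" and \<eta> :: ereal
  assumes concave: "concave_on {s. 0 \<le> s \<and> ereal s < \<eta>} \<phi>"
    and \<phi>': "(\<phi> has_real_derivative \<phi>' s) (at s)"
    and "0 \<le> t" "t \<le> s" "0 < s" "ereal s < \<eta>"
  shows "\<phi>' s * (s - t) \<le> \<phi> s - \<phi> t"
proof -
  obtain s' where s': "ereal s < ereal s'" "ereal s' < \<eta>" using ereal_dense2[OF \<open>ereal s < \<eta>\<close>] by blast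
  have "{0..s'} \<subseteq> {s. 0 \<le> s \<and> ereal s < \<eta>}"
    by (auto intro!: le_less_trans[OF _ s'(2)])
  then have "convex_on {0..s'} (\<lambda>x. - \<phi> x)"
    using convex_on_subset concave unfolding concave_on_def by auto
  moreover have "((\<lambda>x. - \<phi> x) has_real_derivative - \<phi>' s) (at s within {0..s'})"
    using DERIV_minus[OF has_field_derivative_at_within[OF \<phi>']] .
  moreover have "s \<in> interior {0..s'}" "t \<in> {0..s'}" using assms s' by auto
  ultimately have "- \<phi> t - - \<phi> s \<ge> - \<phi>' s * (t - s)"
    by (intro convex_on_imp_above_tangent) auto
  then show ?thesis by (simp add: algebra_simps)
qed

text \<open>From \<open>c d\<^sup>2 \<le> s - t\<close>, the concavity bound and the KL inequality one gets
  \<open>d\<^sup>2 \<le> d' (b / c) (\<phi>s - \<phi>t)\<close>; the AM-GM inequality linearises this.\<close>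

lemma KL_step_ineq:
  fixes d d' s t c b \<phi>s \<phi>t \<phi>' :: real
  assumes "0 < c" "0 \<le> b" "0 \<le> d'" "0 < \<phi>'"
    and decrease: "t + c * d\<^sup>2 \<le> s" and concave: "\<phi>' * (s - t) \<le> \<phi>s - \<phi>t"
    and KL: "1 \<le> \<phi>' * (b * d')"
  shows "2 * d \<le> d' + b / c * (\<phi>s - \<phi>t)"
proof -
  define M where "M = b / c * (\<phi>s - \<phi>t)"
  have "0 \<le> c * d\<^sup>2" using \<open>0 < c\<close> by simp
  then have st: "0 \<le> s - t" using decrease by linarith
  have "c * d\<^sup>2 \<le> (s - t) * 1" using decrease by simp
  also have "\<dots> \<le> (s - t) * (\<phi>' * (b * d'))" using KL st by (rule mult_left_mono)
  also have "\<dots> = (b * d') * (\<phi>' * (s - t))" by (simp add: algebra_simps)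
  also have "\<dots> \<le> (b * d') * (\<phi>s - \<phi>t)"
    using concave \<open>0 \<le> b\<close> \<open>0 \<le> d'\<close> by (intro mult_left_mono) simp_all
  finally have "d\<^sup>2 \<le> d' * M"
    using \<open>0 < c\<close> unfolding M_def by (simp add: field_simps)
  moreover have "0 \<le> \<phi>s - \<phi>t" using concave st \<open>0 < \<phi>'\<close> by (meson mult_nonneg_nonneg less_imp_le order_trans)
  then have "0 \<le> M" using \<open>0 < c\<close> \<open>0 \<le> b\<close> unfolding M_def by simp
  moreover have "(d' + M)\<^sup>2 = (d' - M)\<^sup>2 + 4 * (d' * M)" by (simp add: power2_eq_square algebra_simps)
  ultimately have "(2 * d)\<^sup>2 \<le> (d' + M)\<^sup>2"
    by (simp add: power_mult_distrib) (use zero_le_power2[of "d' - M"] in linarith)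
  then have "2 * d \<le> d' + M" by (rule power2_le_imp_le) (use \<open>0 \<le> M\<close> \<open>0 \<le> d'\<close> in simp)
  then show ?thesis unfolding M_def .
qed

lemma norm_diff_le_sum_steps:
  fixes z :: "nat \<Rightarrow> 'a::real_normed_vector"
  assumes "K \<le> N"
  shows "norm (z (Suc N) - z K) \<le> (\<Sum>n\<in>{K..N}. norm (z (Suc n) - z n))"
proof -
  have "z (Suc N) - z K = (\<Sum>n\<in>{K..N}. z (Suc n) - z n)"
    using assms by (simp add: sum_Suc_diff)
  then show ?thesis by (simp add: norm_sum)
qed

section \<open>Convergence of inertial descent schemes under the KL property\<close>

locale inertial_KL_descent =
  fixes F :: "'z::euclidean_space \<Rightarrow> ereal" and G :: "'z \<Rightarrow> real" and D :: "'z set"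
    and z zh :: "nat \<Rightarrow> 'z" and c b am bm :: real
  \<comment> \<open>\<open>zh k\<close> is the point, possibly extrapolated, from which \<open>z (Suc k)\<close> is computed\<close>
  assumes closed_D: "closed D"
    and F_eq_G: "\<And>u. u \<in> D \<Longrightarrow> F u = ereal (G u)"
    and continuous_G: "continuous_on D G"
    and z_in_D: "\<And>k. z (Suc k) \<in> D"
    and bounded_z: "bounded (range z)"
    and c_pos: "0 < c" and b_nonneg: "0 \<le> b"
    and sufficient_decrease:
      "\<And>k. G (z (Suc (Suc k))) + c * (norm (z (Suc (Suc k)) - zh (Suc k)))\<^sup>2 \<le> G (z (Suc k))"
    and relative_error:
      "\<And>k. \<exists>w\<in>lim_subdiff F (z (Suc k)). norm w \<le> b * norm (z (Suc k) - zh k)"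
    and inertia: "\<And>k. norm (zh (Suc (Suc k)) - z (Suc (Suc k)))
        \<le> am * norm (z (Suc (Suc k)) - z (Suc k)) + bm * norm (z (Suc k) - z k)"
    and am_nonneg: "0 \<le> am" and bm_nonneg: "0 \<le> bm" and am_bm_less: "am + bm < 1"
    and KL: "\<And>u. u \<in> D \<Longrightarrow> KL_at F u"
begin

abbreviation gap :: "nat \<Rightarrow> real" where "gap k \<equiv> norm (z (Suc k) - zh k)"

abbreviation step_length :: "nat \<Rightarrow> real" where "step_length k \<equiv> norm (z (Suc k) - z k)"

lemma step_length_recursion:
  "step_length (n + 2) \<le> gap (n + 2) + am * step_length (n + 1) + bm * step_length n"
proof -
  have "step_length (n + 2) \<le> gap (n + 2) + norm (zh (n + 2) - z (n + 2))"
    using norm_triangle_ineq[of "z (n + 3) - zh (n + 2)" "zh (n + 2) - z (n + 2)"]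
    by (simp add: numeral_3_eq_3 numeral_2_eq_2)
  then show ?thesis using inertia[of n] by (simp add: numeral_2_eq_2)
qed

lemma values_decseq: "decseq (\<lambda>k. G (z (Suc k)))"
proof (rule decseq_SucI)
  show "G (z (Suc (Suc k))) \<le> G (z (Suc k))" for k
    using sufficient_decrease[of k]
      mult_nonneg_nonneg[OF less_imp_le[OF c_pos] zero_le_power2[of "norm (z (Suc (Suc k)) - zh (Suc k))"]]
    by linarith
qed

lemma subseq_eventually_in_D:
  assumes "strict_mono r"
  shows "\<forall>\<^sub>F j in sequentially. r j = Suc (r j - 1) \<and> z (r j) \<in> D"
  using eventually_ge_at_top[of 1]
proof eventually_elim
  case (elim j)
  then have "r j = Suc (r j - 1)" using seq_suble[OF assms, of j] by simp
  then show ?case using z_in_D by metis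
qed

lemma cluster_point_values:
  assumes r: "strict_mono r" and lim: "(z \<circ> r) \<longlonglongrightarrow> zs"
  shows "zs \<in> D" and "(\<lambda>k. G (z (Suc k))) \<longlonglongrightarrow> G zs"
proof -
  have ev: "\<forall>\<^sub>F j in sequentially. r j = Suc (r j - 1) \<and> z (r j) \<in> D"
    by (rule subseq_eventually_in_D[OF r])
  have zr: "(\<lambda>j. z (r j)) \<longlonglongrightarrow> zs" using lim by (simp add: o_def)
  show zs: "zs \<in> D"
    by (rule Lim_in_closed_set[OF closed_D eventually_mono[OF ev] _ zr]) auto
  have Gr: "(\<lambda>j. G (z (r j))) \<longlonglongrightarrow> G zs"
    by (rule continuous_on_tendsto_compose[OF continuous_G zr zs eventually_mono[OF ev]]) simp
  have lower: "G zs \<le> G (z (Suc k))" for k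
  proof (rule tendsto_upperbound[OF Gr])
    show "\<forall>\<^sub>F j in sequentially. G (z (r j)) \<le> G (z (Suc k))"
      using ev eventually_ge_at_top[of "Suc k"]
    proof eventually_elim
      case (elim j)
      then have "k \<le> r j - 1" using seq_suble[OF r, of j] by simp
      then show ?case using decseqD[OF values_decseq] elim by metis
    qed
  qed simp
  obtain l where l: "(\<lambda>k. G (z (Suc k))) \<longlonglongrightarrow> l" "\<forall>k. l \<le> G (z (Suc k))"
    using decseq_convergent[OF values_decseq] lower by metis
  have "l \<le> G zs"
  proof (rule tendsto_lowerbound[OF Gr])
    show "\<forall>\<^sub>F j in sequentially. l \<le> G (z (r j))"
      using ev by eventually_elim (metis l(2))
  qed simp
  moreover have "G zs \<le> l"
    using l(1) lower by (intro tendsto_lowerbound[OF l(1)]) auto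
  ultimately show "(\<lambda>k. G (z (Suc k))) \<longlonglongrightarrow> G zs" using l(1) by simp
qed

lemma gap_square_summable: "summable (\<lambda>k. (gap k)\<^sup>2)"
proof -
  obtain r zs where r: "strict_mono r" and lim: "(z \<circ> r) \<longlonglongrightarrow> zs"
    using bounded_imp_convergent_subsequence[OF bounded_z] by blast
  have lower: "G zs \<le> G (z (Suc k))" for k
    using decseq_ge[OF values_decseq cluster_point_values(2)[OF r lim]] .
  have "summable (\<lambda>k. c * (gap (Suc k))\<^sup>2)"
  proof (rule summableI_nonneg_bounded)
    fix n
    have "(\<Sum>k<n. c * (gap (Suc k))\<^sup>2) \<le> (\<Sum>k<n. G (z (Suc k)) - G (z (Suc (Suc k))))"
      using sufficient_decrease by (intro sum_mono) (simp add: algebra_simps)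
    also have "\<dots> = G (z 1) - G (z (Suc n))"
      using sum_lessThan_telescope'[of "\<lambda>k. G (z (Suc k))" n] by simp
    also have "\<dots> \<le> G (z 1) - G zs" using lower[of n] by simp
    finally show "(\<Sum>k<n. c * (gap (Suc k))\<^sup>2) \<le> G (z 1) - G zs" .
  qed (use c_pos in simp)
  then have "summable (\<lambda>k. (gap (Suc k))\<^sup>2)" using c_pos by simp
  then show ?thesis by (subst (asm) summable_Suc_iff)
qed

lemma step_length_square_summable: "summable (\<lambda>k. (step_length k)\<^sup>2)"
  by (rule inertial_recursion_square_summable[OF _ step_length_recursion
        am_nonneg bm_nonneg am_bm_less gap_square_summable]) simp

lemma gap_tendsto_0: "gap \<longlonglongrightarrow> 0"
  using tendsto_real_sqrt[OF summable_LIMSEQ_zero[OF gap_square_summable]] by simp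

lemma step_length_tendsto_0: "step_length \<longlonglongrightarrow> 0"
  using tendsto_real_sqrt[OF summable_LIMSEQ_zero[OF step_length_square_summable]] by simp

end

locale inertial_KL_descent_at_cluster =
  inertial_KL_descent F G D z zh c b am bm
  for F :: "'z::euclidean_space \<Rightarrow> ereal" and G D z zh c b am bm +
  fixes r :: "nat \<Rightarrow> nat" and zs :: 'z and \<eta> :: ereal and \<rho> :: real and \<phi> \<phi>' :: "real \<Rightarrow> real"
  assumes subseq: "strict_mono r" and cluster: "(z \<circ> r) \<longlonglongrightarrow> zs"
    and \<eta>_pos: "0 < \<eta>" and \<rho>_pos: "0 < \<rho>"
    and \<phi>_cont: "continuous_on {s. 0 \<le> s \<and> ereal s < \<eta>} \<phi>"
    and \<phi>_concave: "concave_on {s. 0 \<le> s \<and> ereal s < \<eta>} \<phi>"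
    and \<phi>_nonneg: "\<And>s. 0 \<le> s \<Longrightarrow> ereal s < \<eta> \<Longrightarrow> 0 \<le> \<phi> s" and \<phi>_zero: "\<phi> 0 = 0"
    and \<phi>_deriv: "\<And>s. 0 < s \<Longrightarrow> ereal s < \<eta> \<Longrightarrow> (\<phi> has_real_derivative \<phi>' s) (at s) \<and> 0 < \<phi>' s"
    and KL_ineq: "\<And>u. u \<in> ball zs \<rho> \<Longrightarrow> F zs < F u \<Longrightarrow> F u < F zs + \<eta> \<Longrightarrow>
        lim_subdiff F u \<noteq> {} \<Longrightarrow> 1 \<le> \<phi>' (real_of_ereal (F u - F zs)) * infdist 0 (lim_subdiff F u)"
begin

abbreviation excess :: "nat \<Rightarrow> real" where "excess n \<equiv> G (z n) - G zs"

lemma zs_in_D: "zs \<in> D"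
  using cluster_point_values(1)[OF subseq cluster] .

lemma excess_tendsto_0: "(\<lambda>k. excess (Suc k)) \<longlonglongrightarrow> 0"
  using tendsto_diff[OF cluster_point_values(2)[OF subseq cluster] tendsto_const[of "G zs"]] by simp

lemma excess_nonneg: "1 \<le> n \<Longrightarrow> 0 \<le> excess n"
  using decseq_ge[OF values_decseq cluster_point_values(2)[OF subseq cluster], of "n - 1"] by simp

lemma excess_antimono: "1 \<le> m \<Longrightarrow> m \<le> n \<Longrightarrow> excess n \<le> excess m"
  using decseqD[OF values_decseq, of "m - 1" "n - 1"] by simp

lemma KL_step:
  assumes "1 \<le> n" and "z n \<in> ball zs \<rho>" and "ereal (excess n) < \<eta>"
  shows "2 * gap n \<le> gap (n - 1) + b / c * (\<phi> (excess n) - \<phi> (excess (Suc n)))"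
proof -
  obtain m where n: "n = Suc m" using assms(1) by (cases n) auto
  have decrease: "excess (Suc n) + c * (gap n)\<^sup>2 \<le> excess n"
    using sufficient_decrease[of m] unfolding n by simp
  show ?thesis
  proof (cases "excess n = 0")
    case True
    then have "excess (Suc n) = 0"
      using excess_nonneg[of "Suc n"] excess_antimono[of n "Suc n"] assms(1) by simp
    with True decrease c_pos have "gap n = 0" by (simp add: mult_le_0_iff)
    with True \<open>excess (Suc n) = 0\<close> show ?thesis by simp
  next
    case False
    then have s: "0 < excess n" using excess_nonneg[OF assms(1)] by simp
    obtain w where w: "w \<in> lim_subdiff F (z n)" "norm w \<le> b * gap (n - 1)"
      using relative_error[of m] unfolding n by auto
    have Fz: "F (z n) = ereal (G (z n))" using F_eq_G[OF z_in_D[of m]] unfolding n .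
    have Fzs: "F zs = ereal (G zs)" using F_eq_G[OF zs_in_D] .
    have "F (z n) < F zs + \<eta>" using assms(3) \<eta>_pos by (cases \<eta>) (simp_all add: Fz Fzs)
    moreover have "F zs < F (z n)" using s by (simp add: Fz Fzs)
    ultimately have "1 \<le> \<phi>' (excess n) * infdist 0 (lim_subdiff F (z n))"
      using KL_ineq[OF assms(2)] w(1) by (auto simp: Fz Fzs)
    also have "\<dots> \<le> \<phi>' (excess n) * (b * gap (n - 1))"
      using infdist_le[OF w(1), of 0] w(2) \<phi>_deriv[OF s assms(3)]
      by (intro mult_left_mono) simp_all
    finally have KL: "1 \<le> \<phi>' (excess n) * (b * gap (n - 1))" .
    have "0 \<le> excess (Suc n)" using excess_nonneg[of "Suc n"] by simp
    moreover have "excess (Suc n) \<le> excess n"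
      using decrease mult_nonneg_nonneg[OF less_imp_le[OF c_pos] zero_le_power2[of "gap n"]] by linarith
    ultimately have "\<phi>' (excess n) * (excess n - excess (Suc n)) \<le> \<phi> (excess n) - \<phi> (excess (Suc n))"
      using \<phi>_deriv[OF s assms(3)] by (intro concave_on_deriv_le[OF \<phi>_concave] s assms(3)) auto
    then show ?thesis
      using KL_step_ineq[OF c_pos b_nonneg norm_ge_zero _ decrease _ KL] \<phi>_deriv[OF s assms(3)] by blast
  qed
qed

text \<open>A bound for \<open>1 - am - bm\<close> times the length of the tail from \<open>k + 2\<close> on, see
  \<open>tail_sum_bound\<close>; it tends to 0.\<close>

abbreviation tail_bound :: "nat \<Rightarrow> real" where
  "tail_bound k \<equiv> gap (k + 1) + b / c * \<phi> (excess (k + 2))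
     + am * step_length (k + 1) + bm * (step_length (k + 1) + step_length k)"

lemma good_start_exists:
  obtains k where "dist (z (k + 2)) zs < \<rho> / 2" and "ereal (excess (k + 2)) < \<eta>"
    and "tail_bound k < (1 - am - bm) * \<rho> / 2"
proof -
  have excess2: "(\<lambda>k. excess (k + 2)) \<longlonglongrightarrow> 0"
    using LIMSEQ_ignore_initial_segment[OF excess_tendsto_0, of 1] by (simp add: numeral_2_eq_2)
  then have "(\<lambda>k. ereal (excess (k + 2))) \<longlonglongrightarrow> ereal 0" by (rule tendsto_ereal)
  then have ev\<eta>: "\<forall>\<^sub>F k in sequentially. ereal (excess (k + 2)) < \<eta>"
    using \<eta>_pos by (intro order_tendstoD(2)) (auto simp: zero_ereal_def)
  have "\<forall>\<^sub>F k in sequentially. excess (k + 2) \<in> {s. 0 \<le> s \<and> ereal s < \<eta>}"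
    using ev\<eta> by eventually_elim (use excess_nonneg in auto)
  then have "(\<lambda>k. \<phi> (excess (k + 2))) \<longlonglongrightarrow> \<phi> 0"
    using \<eta>_pos by (intro continuous_on_tendsto_compose[OF \<phi>_cont excess2]) (auto simp: zero_ereal_def)
  moreover have "(\<lambda>k. gap (k + 1)) \<longlonglongrightarrow> 0" "(\<lambda>k. step_length (k + 1)) \<longlonglongrightarrow> 0"
    by (rule LIMSEQ_ignore_initial_segment[OF gap_tendsto_0]
        LIMSEQ_ignore_initial_segment[OF step_length_tendsto_0])+
  ultimately have "tail_bound \<longlonglongrightarrow> 0 + b / c * 0 + am * 0 + bm * (0 + 0)"
    unfolding \<phi>_zero by (intro tendsto_intros step_length_tendsto_0)
  then have "\<forall>\<^sub>F k in sequentially. tail_bound k < (1 - am - bm) * \<rho> / 2"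
    using am_bm_less \<rho>_pos by (intro order_tendstoD(2)) auto
  with ev\<eta> obtain N where N: "\<And>k. N \<le> k \<Longrightarrow>
      ereal (excess (k + 2)) < \<eta> \<and> tail_bound k < (1 - am - bm) * \<rho> / 2"
    unfolding eventually_sequentially
    by (metis (no_types, lifting) eventually_conj eventually_sequentially)
  have "\<forall>\<^sub>F j in sequentially. dist (z (r j)) zs < \<rho> / 2"
    using tendstoD[OF cluster, of "\<rho> / 2"] \<rho>_pos by (simp add: o_def)
  then obtain j where j: "dist (z (r j)) zs < \<rho> / 2" "N + 2 \<le> j"
    using eventually_ge_at_top[of "N + 2"]
    by (metis (no_types, lifting) eventually_conj eventually_sequentially order_refl)
  then have "N \<le> r j - 2" "r j - 2 + 2 = r j" using seq_suble[OF subseq, of j] by auto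
  then show ?thesis using that[of "r j - 2"] N j(1) by metis
qed

context
  fixes k :: nat
  assumes start_close: "dist (z (k + 2)) zs < \<rho> / 2"
    and start_excess: "ereal (excess (k + 2)) < \<eta>"
    and start_tail: "tail_bound k < (1 - am - bm) * \<rho> / 2"
begin

lemma excess_below_\<eta>: "k + 2 \<le> n \<Longrightarrow> ereal (excess n) < \<eta>"
  using excess_antimono[of "k + 2" n] start_excess by (auto intro: le_less_trans[rotated])

lemma tail_sum_bound:
  assumes in_ball: "\<And>n. k + 2 \<le> n \<Longrightarrow> n \<le> k + 2 + m \<Longrightarrow> z n \<in> ball zs \<rho>"
  shows "(\<Sum>n\<in>{k+2..k+2+m}. step_length n) < \<rho> / 2"
proof -
  have "(\<Sum>n\<in>{Suc (k + 1)..k + 2 + m}. gap n) + gap (k + 2 + m) \<le>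
      gap (k + 1) + b / c * (\<phi> (excess (Suc (k + 1))) - \<phi> (excess (Suc (k + 2 + m))))"
    by (rule telescoping_two_step_sum) (use KL_step in_ball excess_below_\<eta> in auto)
  moreover have "{Suc (k + 1)..k + 2 + m} = {k + 2..k + 2 + m}" "Suc (k + 1) = k + 2" by auto
  ultimately have "(\<Sum>n\<in>{k+2..k+2+m}. gap n) + gap (k + 2 + m) \<le>
      gap (k + 1) + b / c * \<phi> (excess (k + 2)) - b / c * \<phi> (excess (Suc (k + 2 + m)))"
    by (simp only: right_diff_distrib add_diff_eq)
  moreover have "0 \<le> b / c * \<phi> (excess (Suc (k + 2 + m)))"
    using b_nonneg c_pos excess_nonneg[of "Suc (k + 2 + m)"] excess_below_\<eta>[of "Suc (k + 2 + m)"]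
    by (simp add: \<phi>_nonneg)
  moreover have "0 \<le> gap (k + 2 + m)" by simp
  ultimately have "(\<Sum>n\<in>{k+2..k+2+m}. gap n) \<le> gap (k + 1) + b / c * \<phi> (excess (k + 2))"
    by linarith
  moreover have "(1 - am - bm) * (\<Sum>n\<in>{k+2..k+2+m}. step_length n)
      + am * step_length (k+2+m) + bm * (step_length (k+2+m) + step_length (k+1+m))
     \<le> (\<Sum>n\<in>{k+2..k+2+m}. gap n) + am * step_length (k+1) + bm * (step_length (k+1) + step_length k)"
    by (rule inertial_recursion_sum[OF _ step_length_recursion am_nonneg bm_nonneg]) simp
  moreover have "0 \<le> am * step_length (k+2+m) + bm * (step_length (k+2+m) + step_length (k+1+m))"
    using am_nonneg bm_nonneg by simp
  ultimately have "(1 - am - bm) * (\<Sum>n\<in>{k+2..k+2+m}. step_length n) < (1 - am - bm) * (\<rho> / 2)"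
    using start_tail by linarith
  then show ?thesis using am_bm_less by simp
qed

lemma tail_in_ball: "k + 2 \<le> n \<Longrightarrow> z n \<in> ball zs \<rho>"
proof -
  have "\<forall>n. k + 2 \<le> n \<longrightarrow> n \<le> k + 2 + m \<longrightarrow> z n \<in> ball zs \<rho>" for m
  proof (induction m)
    case 0
    show ?case using start_close \<rho>_pos by (auto simp: dist_commute)
  next
    case (Suc m)
    have "norm (z (Suc (k + 2 + m)) - z (k + 2)) \<le> (\<Sum>n\<in>{k+2..k+2+m}. step_length n)"
      by (rule norm_diff_le_sum_steps) simp
    also have "\<dots> < \<rho> / 2" using tail_sum_bound Suc.IH by blast
    finally have "dist zs (z (Suc (k + 2 + m))) < \<rho>"
      using start_close norm_triangle_ineq[of "z (Suc (k+2+m)) - z (k+2)" "z (k+2) - zs"]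
      by (simp add: dist_norm norm_minus_commute)
    then show ?case using Suc.IH by (auto simp: le_Suc_eq)
  qed
  then show "k + 2 \<le> n \<Longrightarrow> z n \<in> ball zs \<rho>" for n by (metis le_add_diff_inverse order_refl)
qed

lemma finite_length_from_start: "summable step_length"
proof (rule summableI_nonneg_bounded)
  fix N
  have "(\<Sum>n<N. step_length n) \<le> (\<Sum>n\<in>{..<k+2} \<union> {k+2..k+2+N}. step_length n)"
    by (rule sum_mono2) auto
  also have "\<dots> = (\<Sum>n<k+2. step_length n) + (\<Sum>n\<in>{k+2..k+2+N}. step_length n)"
    by (rule sum.union_disjoint) auto
  also have "\<dots> \<le> (\<Sum>n<k+2. step_length n) + \<rho> / 2"
    using tail_sum_bound[of N] tail_in_ball by fastforce
  finally show "(\<Sum>n<N. step_length n) \<le> (\<Sum>n<k+2. step_length n) + \<rho> / 2" .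
qed simp

end

lemma finite_length: "summable step_length"
  using good_start_exists finite_length_from_start by blast

lemma tendsto_cluster_point: "z \<longlonglongrightarrow> zs"
proof -
  have "summable (\<lambda>n. z (Suc n) - z n)" using finite_length by (rule summable_norm_cancel)
  then have "(\<lambda>n. \<Sum>i<n. z (Suc i) - z i) \<longlonglongrightarrow> (\<Sum>n. z (Suc n) - z n)"
    by (rule summable_LIMSEQ)
  then have "(\<lambda>n. z n - z 0) \<longlonglongrightarrow> (\<Sum>n. z (Suc n) - z n)"
    by (simp add: sum_lessThan_telescope)
  then have "(\<lambda>n. z n - z 0 + z 0) \<longlonglongrightarrow> (\<Sum>n. z (Suc n) - z n) + z 0"
    by (intro tendsto_add tendsto_const)
  then have lim: "z \<longlonglongrightarrow> (\<Sum>n. z (Suc n) - z n) + z 0" by simp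
  then have "(\<Sum>n. z (Suc n) - z n) + z 0 = zs"
    using LIMSEQ_unique[OF LIMSEQ_subseq_LIMSEQ[OF lim subseq] cluster] by simp
  then show ?thesis using lim by simp
qed

lemma cluster_point_critical: "0 \<in> lim_subdiff F zs"
proof -
  obtain W where W: "\<And>k. W k \<in> lim_subdiff F (z (Suc k))" "\<And>k. norm (W k) \<le> b * gap k"
    using relative_error by metis
  have "(\<lambda>k. b * gap k) \<longlonglongrightarrow> b * 0" by (intro tendsto_mult tendsto_const gap_tendsto_0)
  then have "W \<longlonglongrightarrow> 0" using W(2) by (intro Lim_null_comparison[of W]) auto
  moreover have "(\<lambda>k. z (Suc k)) \<longlonglongrightarrow> zs"
    using LIMSEQ_ignore_initial_segment[OF tendsto_cluster_point, of 1] by simp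
  ultimately show ?thesis
    using lim_subdiff_closed[OF _ F_eq_G[OF z_in_D] F_eq_G[OF zs_in_D]
        cluster_point_values(2)[OF subseq cluster] W(1)] by blast
qed

end

theorem (in inertial_KL_descent) finite_length_and_critical_limit:
  "summable step_length \<and> (\<exists>zs. z \<longlonglongrightarrow> zs \<and> 0 \<in> lim_subdiff F zs)"
proof -
  obtain r zs where r: "strict_mono r" "(z \<circ> r) \<longlonglongrightarrow> zs"
    using bounded_imp_convergent_subsequence[OF bounded_z] by blast
  from KL[OF cluster_point_values(1)[OF r]] obtain \<eta> U \<phi> \<phi>' where KLd: "0 < \<eta>" "open U" "zs \<in> U"
      "continuous_on {s. 0 \<le> s \<and> ereal s < \<eta>} \<phi>" "concave_on {s. 0 \<le> s \<and> ereal s < \<eta>} \<phi>"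
      "\<forall>s. 0 \<le> s \<and> ereal s < \<eta> \<longrightarrow> 0 \<le> \<phi> s" "\<phi> 0 = 0"
      "\<forall>s. 0 < s \<and> ereal s < \<eta> \<longrightarrow> (\<phi> has_real_derivative \<phi>' s) (at s) \<and> 0 < \<phi>' s"
      "\<forall>x\<in>U. F zs < F x \<and> F x < F zs + \<eta> \<longrightarrow> lim_subdiff F x \<noteq> {} \<longrightarrow>
            \<phi>' (real_of_ereal (F x - F zs)) * infdist 0 (lim_subdiff F x) \<ge> 1"
    unfolding KL_at_def by blast
  obtain \<rho> where "0 < \<rho>" "ball zs \<rho> \<subseteq> U" using KLd(2,3) open_contains_ball by blast
  then have KL_ball: "\<And>u. u \<in> ball zs \<rho> \<Longrightarrow> F zs < F u \<Longrightarrow> F u < F zs + \<eta> \<Longrightarrow>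
      lim_subdiff F u \<noteq> {} \<Longrightarrow> 1 \<le> \<phi>' (real_of_ereal (F u - F zs)) * infdist 0 (lim_subdiff F u)"
    using KLd(9) by blast
  interpret inertial_KL_descent_at_cluster F G D z zh c b am bm r zs \<eta> \<rho> \<phi> \<phi>'
    by unfold_locales (use r KLd \<open>0 < \<rho>\<close> KL_ball in \<open>auto simp del: mem_ball\<close>)
  show ?thesis using finite_length tendsto_cluster_point cluster_point_critical by blast
qed

section \<open>The inertial alternating Bregman scheme\<close>

lemma has_derivative_fst_snd_sum:
  fixes f :: "'a::real_inner \<Rightarrow> real" and g :: "'b::real_inner \<Rightarrow> real"
  assumes f: "\<And>u. (f has_derivative (\<lambda>d. df u \<bullet> d)) (at u)"
    and g: "\<And>v. (g has_derivative (\<lambda>d. dg v \<bullet> d)) (at v)"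
  shows "((\<lambda>w. f (fst w) + g (snd w)) has_derivative (\<lambda>d. (df (fst w), dg (snd w)) \<bullet> d)) (at w)"
proof -
  have "((\<lambda>w. f (fst w)) has_derivative (\<lambda>d. df (fst w) \<bullet> fst d)) (at w)"
    using has_derivative_compose[OF has_derivative_fst[OF has_derivative_ident] f[of "fst w"]] by simp
  moreover have "((\<lambda>w. g (snd w)) has_derivative (\<lambda>d. dg (snd w) \<bullet> snd d)) (at w)"
    using has_derivative_compose[OF has_derivative_snd[OF has_derivative_ident] g[of "snd w"]] by simp
  ultimately show ?thesis
    using has_derivative_add by (fastforce simp: inner_prod_def)
qed

locale inertial_alternating_bregman =
  fixes f :: "'a::euclidean_space \<Rightarrow> real" and g :: "'b::euclidean_space \<Rightarrow> real"
    and Q :: "'a \<times> 'b \<Rightarrow> ereal" and L :: "'a \<times> 'b \<Rightarrow> ereal"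
    and df :: "'a \<Rightarrow> 'a" and dg :: "'b \<Rightarrow> 'b"
    and Lf Lg :: real
    and phi1 :: "'a \<Rightarrow> real" and dphi1 :: "'a \<Rightarrow> 'a"
    and phi2 :: "'b \<Rightarrow> real" and dphi2 :: "'b \<Rightarrow> 'b"
    and \<theta>1 \<theta>2 \<eta>1 \<eta>2 :: real
    and q :: "'a \<times> 'b \<Rightarrow> real" and dxq :: "'a \<Rightarrow> 'b \<Rightarrow> 'a" and h :: "'a \<Rightarrow> ereal"
    and x xh :: "nat \<Rightarrow> 'a" and y yh :: "nat \<Rightarrow> 'b"
    and xm1 :: 'a and ym1 :: 'b
    and \<alpha> \<beta> :: "nat \<Rightarrow> real" and \<alpha>max \<beta>max :: real
  assumes L_def: "\<And>z. L z = ereal (f (fst z)) + Q z + ereal (g (snd z))"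
    and f_grad: "\<And>u. (f has_derivative (\<lambda>d. df u \<bullet> d)) (at u)"
    and g_grad: "\<And>v. (g has_derivative (\<lambda>d. dg v \<bullet> d)) (at v)"
    and df_lip: "Lf-lipschitz_on UNIV df" and dg_lip: "Lg-lipschitz_on UNIV dg"
    and Q_proper: "proper_fun Q"
    and phi1_grad: "\<And>u. (phi1 has_derivative (\<lambda>d. dphi1 u \<bullet> d)) (at u)"
    and phi2_grad: "\<And>v. (phi2 has_derivative (\<lambda>d. dphi2 v \<bullet> d)) (at v)"
    and phi1_sc: "strongly_convex \<theta>1 phi1" and phi2_sc: "strongly_convex \<theta>2 phi2"
    and \<theta>1_gt: "\<theta>1 > Lf" and \<theta>2_gt: "\<theta>2 > Lg"
    and dphi1_lip: "\<eta>1-lipschitz_on UNIV dphi1" and dphi2_lip: "\<eta>2-lipschitz_on UNIV dphi2"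
    and L_coercive: "coercive L"
    and domQ_closed: "closed (edom Q)"
    and partial_subdiff: "\<And>u v. (u, v) \<in> edom Q \<Longrightarrow>
          lim_subdiff (\<lambda>u'. Q (u', v)) u \<times> lim_subdiff (\<lambda>v'. Q (u, v')) v \<subseteq> lim_subdiff Q (u, v)"
    and Q_split: "\<And>u v. Q (u, v) = ereal (q (u, v)) + h u"
    and h_cont: "continuous_on (edom h) h"
    and q_cont: "continuous_on (edom Q) q"
    and q_grad: "\<And>u v. ((\<lambda>u'. q (u', v)) has_derivative (\<lambda>d. dxq u v \<bullet> d)) (at u)"
    and dxq_lip: "\<And>D1 D2. bounded D1 \<Longrightarrow> bounded D2 \<Longrightarrow> D1 \<times> D2 \<subseteq> edom Q \<Longrightarrow>
          \<exists>\<xi>>0. \<forall>ub\<in>D1. \<forall>v\<in>D2. \<forall>vb\<in>D2. norm (dxq ub v - dxq ub vb) \<le> \<xi> * norm (v - vb)"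
    and L_KL: "KL_function L"
    and \<alpha>max_nn: "0 \<le> \<alpha>max" and \<beta>max_nn: "0 \<le> \<beta>max" and \<alpha>\<beta>_lt: "\<alpha>max + \<beta>max < 1"
    and \<alpha>_range: "\<And>k. \<alpha> k \<in> {0..\<alpha>max}" and \<beta>_range: "\<And>k. \<beta> k \<in> {0..\<beta>max}"
    and step_x: "\<And>k. is_arg_min
          (\<lambda>u. Q (u, yh k) + ereal (df (xh k) \<bullet> u) + ereal (bregman phi1 dphi1 u (xh k)))
          (\<lambda>_. True) (x (Suc k))"
    and step_y: "\<And>k. is_arg_min
          (\<lambda>v. Q (x (Suc k), v) + ereal (dg (yh k) \<bullet> v) + ereal (bregman phi2 dphi2 v (yh k)))
          (\<lambda>_. True) (y (Suc k))"
    and step_hat: "\<And>k.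
          let xp = (if k = 0 then xm1 else x (k - 1));
              yp = (if k = 0 then ym1 else y (k - 1));
              u = x (Suc k) + \<alpha> k *\<^sub>R (x (Suc k) - x k) + \<beta> k *\<^sub>R (x k - xp);
              v = y (Suc k) + \<alpha> k *\<^sub>R (y (Suc k) - y k) + \<beta> k *\<^sub>R (y k - yp)
          in (xh (Suc k), yh (Suc k)) =
             (if L (u, v) \<le> L (x (Suc k), y (Suc k)) then (u, v) else (x (Suc k), y (Suc k)))"
begin

abbreviation z :: "nat \<Rightarrow> 'a \<times> 'b" where "z k \<equiv> (x k, y k)"

abbreviation zh :: "nat \<Rightarrow> 'a \<times> 'b" where "zh k \<equiv> (xh k, yh k)"

lemma Q_not_MInf: "Q w \<noteq> -\<infinity>"
  using Q_proper unfolding proper_fun_def by blast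

lemma h_not_MInf: "h u \<noteq> -\<infinity>"
  using Q_not_MInf[of "(u, undefined)"] Q_split[of u undefined] by auto

lemma Q_finite_iff: "Q (u, v) \<noteq> \<infinity> \<longleftrightarrow> h u \<noteq> \<infinity>"
  using Q_split[of u v] by (cases "h u") auto

lemma edom_Q_iff: "(u, v) \<in> edom Q \<longleftrightarrow> h u \<noteq> \<infinity>"
  using Q_finite_iff by (simp add: edom_def)

lemma L_eq: "L w = Q w + ereal (f (fst w) + g (snd w))"
  using L_def[of w] Q_not_MInf[of w] by (cases "Q w") auto

lemma edom_L: "edom L = edom Q"
proof -
  have "L w \<noteq> \<infinity> \<longleftrightarrow> Q w \<noteq> \<infinity>" for w using L_eq[of w] by (cases "Q w") auto
  then show ?thesis by (simp add: edom_def)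
qed

lemma iterate_in_edom_Q: "z (Suc k) \<in> edom Q"
proof -
  obtain w0 where "Q w0 \<noteq> \<infinity>" using Q_proper unfolding proper_fun_def by blast
  then have "(fst w0, yh k) \<in> edom Q" using edom_Q_iff[of "fst w0"] edom_Q_iff[of "fst w0" "snd w0"]
    by (simp add: edom_def)
  moreover have "Q (x (Suc k), yh k) + ereal (df (xh k) \<bullet> x (Suc k)) + ereal (bregman phi1 dphi1 (x (Suc k)) (xh k))
      \<le> Q (fst w0, yh k) + ereal (df (xh k) \<bullet> fst w0) + ereal (bregman phi1 dphi1 (fst w0) (xh k))"
    using step_x[of k] unfolding is_arg_min_linorder by blast
  ultimately have "(x (Suc k), yh k) \<in> edom Q" by (auto simp: edom_def)
  then show ?thesis using edom_Q_iff by simp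
qed

abbreviation decrease_const :: real where "decrease_const \<equiv> min (\<theta>1 - Lf) (\<theta>2 - Lg) / 2"

lemma decrease_const_pos: "0 < decrease_const"
  using \<theta>1_gt \<theta>2_gt by simp

lemma sufficient_decrease_step:
  "L (z (Suc k)) + ereal (decrease_const * (norm (z (Suc k) - zh k))\<^sup>2) \<le> L (zh k)"
proof -
  let ?a = "xh k" and ?b = "yh k" and ?x1 = "x (Suc k)" and ?y1 = "y (Suc k)"
  have X: "Q (?x1, ?b) + ereal (f ?x1 + (\<theta>1 - Lf) / 2 * (norm (?x1 - ?a))\<^sup>2) \<le> Q (?a, ?b) + ereal (f ?a)"
    by (rule bregman_prox_step_decrease[where \<Psi> = "\<lambda>u. Q (u, ?b)",
          OF f_grad df_lip phi1_grad phi1_sc Q_not_MInf step_x])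
  have Y: "Q (?x1, ?y1) + ereal (g ?y1 + (\<theta>2 - Lg) / 2 * (norm (?y1 - ?b))\<^sup>2) \<le> Q (?x1, ?b) + ereal (g ?b)"
    by (rule bregman_prox_step_decrease[where \<Psi> = "\<lambda>v. Q (?x1, v)",
          OF g_grad dg_lip phi2_grad phi2_sc Q_not_MInf step_y])
  have c: "decrease_const * (norm (?x1 - ?a))\<^sup>2 \<le> (\<theta>1 - Lf) / 2 * (norm (?x1 - ?a))\<^sup>2"
    "decrease_const * (norm (?y1 - ?b))\<^sup>2 \<le> (\<theta>2 - Lg) / 2 * (norm (?y1 - ?b))\<^sup>2"
    by (intro mult_right_mono; simp)+
  have N: "decrease_const * (norm (z (Suc k) - zh k))\<^sup>2 =
      decrease_const * (norm (?x1 - ?a))\<^sup>2 + decrease_const * (norm (?y1 - ?b))\<^sup>2"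
    by (simp add: norm_Pair distrib_left)
  show ?thesis
  proof (cases "Q (?a, ?b)")
    case PInf
    then show ?thesis by (simp add: L_eq)
  next
    case MInf
    then show ?thesis using Q_not_MInf by simp
  next
    case (real r)
    with X obtain ra where ra: "Q (?x1, ?b) = ereal ra"
      using Q_not_MInf[of "(?x1, ?b)"] by (cases "Q (?x1, ?b)") auto
    with Y obtain rb where rb: "Q (?x1, ?y1) = ereal rb"
      using Q_not_MInf[of "(?x1, ?y1)"] by (cases "Q (?x1, ?y1)") auto
    have "ra + (f ?x1 + (\<theta>1 - Lf) / 2 * (norm (?x1 - ?a))\<^sup>2) \<le> r + f ?a"
      "rb + (g ?y1 + (\<theta>2 - Lg) / 2 * (norm (?y1 - ?b))\<^sup>2) \<le> ra + g ?b"
      using X Y real ra rb by simp_all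
    then have "rb + (f ?x1 + g ?y1) + decrease_const * (norm (z (Suc k) - zh k))\<^sup>2 \<le> r + (f ?a + g ?b)"
      using c N by linarith
    then show ?thesis using real rb by (simp add: L_eq)
  qed
qed

lemma L_extrapolation_le: "L (zh (Suc k)) \<le> L (z (Suc k))"
  using step_hat[of k] by (auto simp: Let_def split: if_splits)

lemma extrapolation_dist_le:
  "norm (zh (Suc (Suc k)) - z (Suc (Suc k)))
     \<le> \<alpha>max * norm (z (Suc (Suc k)) - z (Suc k)) + \<beta>max * norm (z (Suc k) - z k)"
proof -
  let ?v = "\<alpha> (Suc k) *\<^sub>R (z (Suc (Suc k)) - z (Suc k)) + \<beta> (Suc k) *\<^sub>R (z (Suc k) - z k)"
  have "zh (Suc (Suc k)) - z (Suc (Suc k)) = 0 \<or> zh (Suc (Suc k)) - z (Suc (Suc k)) = ?v"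
    using step_hat[of "Suc k"] by (auto simp: Let_def split: if_splits)
  moreover have "norm ?v \<le> \<alpha>max * norm (z (Suc (Suc k)) - z (Suc k)) + \<beta>max * norm (z (Suc k) - z k)"
  proof -
    have "norm ?v \<le> \<bar>\<alpha> (Suc k)\<bar> * norm (z (Suc (Suc k)) - z (Suc k)) + \<bar>\<beta> (Suc k)\<bar> * norm (z (Suc k) - z k)"
      using norm_triangle_ineq[of "\<alpha> (Suc k) *\<^sub>R (z (Suc (Suc k)) - z (Suc k))"
          "\<beta> (Suc k) *\<^sub>R (z (Suc k) - z k)"]
      unfolding norm_scaleR .
    also have "\<dots> \<le> \<alpha>max * norm (z (Suc (Suc k)) - z (Suc k)) + \<beta>max * norm (z (Suc k) - z k)"
      using \<alpha>_range[of "Suc k"] \<beta>_range[of "Suc k"] by (intro add_mono mult_right_mono) auto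
    finally show ?thesis .
  qed
  ultimately show ?thesis using \<alpha>max_nn \<beta>max_nn by auto
qed

lemma L_iterate_le_extrapolated: "L (z (Suc k)) \<le> L (zh k)"
proof -
  have "0 \<le> ereal (decrease_const * (norm (z (Suc k) - zh k))\<^sup>2)"
    using decrease_const_pos by simp
  then have "L (z (Suc k)) \<le> L (z (Suc k)) + ereal (decrease_const * (norm (z (Suc k) - zh k))\<^sup>2)"
    by (rule add_increasing2) simp
  also have "\<dots> \<le> L (zh k)" by (rule sufficient_decrease_step)
  finally show ?thesis .
qed

lemma L_iterates_le_first:
  assumes "1 \<le> n"
  shows "L (z n) \<le> L (z 1)" and "L (zh n) \<le> L (z 1)"
proof -
  have "L (z (Suc (Suc k))) \<le> L (z (Suc k))" for k
    using L_iterate_le_extrapolated[of "Suc k"] L_extrapolation_le[of k] by (rule order_trans)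
  then have "decseq (\<lambda>k. L (z (Suc k)))" by (rule decseq_SucI)
  then have le: "L (z (Suc k)) \<le> L (z 1)" for k using decseqD[of _ 0 k] by simp
  obtain m where n: "n = Suc m" using assms by (cases n) auto
  show "L (z n) \<le> L (z 1)" using le[of m] unfolding n .
  show "L (zh n) \<le> L (z 1)" using L_extrapolation_le[of m] le[of m] unfolding n by (rule order_trans)
qed

lemma bounded_iterates: "bounded (range z)" "bounded (range zh)"
proof -
  have "L (z 1) \<noteq> \<infinity>" using iterate_in_edom_Q[of 0] unfolding edom_L[symmetric] by (simp add: edom_def)
  then have B: "bounded {w. L w \<le> L (z 1)}" by (rule coercive_bounded_sublevel[OF L_coercive])
  have "z n \<in> insert (z 0) {w. L w \<le> L (z 1)}" "zh n \<in> insert (zh 0) {w. L w \<le> L (z 1)}" for n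
    using L_iterates_le_first[of n] by (cases n; simp)+
  then have "range z \<subseteq> insert (z 0) {w. L w \<le> L (z 1)}" "range zh \<subseteq> insert (zh 0) {w. L w \<le> L (z 1)}"
    by blast+
  then show "bounded (range z)" "bounded (range zh)"
    using B by (meson bounded_insert bounded_subset)+
qed

lemma continuous_on_real_L: "continuous_on (edom Q) (\<lambda>w. real_of_ereal (L w))"
proof -
  have "continuous_on (edom h) (real_of_ereal \<circ> h)"
    using h_cont continuous_on_iff_real[of "edom h" h] h_not_MInf by (auto simp: edom_def)
  moreover have "fst ` edom Q \<subseteq> edom h" using edom_Q_iff by (force simp: edom_def)
  ultimately have h': "continuous_on (edom Q) (\<lambda>w. real_of_ereal (h (fst w)))"
    using continuous_on_compose2[OF _ continuous_on_fst[OF continuous_on_id]] by (simp add: o_def)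
  have "continuous_on UNIV f" "continuous_on UNIV g"
    using f_grad g_grad by (meson continuous_at_imp_continuous_on has_derivative_continuous)+
  then have f': "continuous_on (edom Q) (\<lambda>w. f (fst w))" and g': "continuous_on (edom Q) (\<lambda>w. g (snd w))"
    by (auto intro: continuous_on_compose2[OF _ continuous_on_fst[OF continuous_on_id]]
        continuous_on_compose2[OF _ continuous_on_snd[OF continuous_on_id]])
  have "continuous_on (edom Q) (\<lambda>w. f (fst w) + (q w + real_of_ereal (h (fst w))) + g (snd w))"
    by (intro continuous_on_add f' g' h' q_cont)
  moreover have "f (fst w) + (q w + real_of_ereal (h (fst w))) + g (snd w) = real_of_ereal (L w)"
    if w_dom: "w \<in> edom Q" for w
  proof -
    obtain u v where w: "w = (u, v)" by (cases w)
    then obtain r where "h u = ereal r" using w_dom edom_Q_iff h_not_MInf[of u] by (cases "h u") auto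
    then show ?thesis unfolding w L_eq Q_split by simp
  qed
  ultimately show ?thesis by (rule continuous_on_eq)
qed

lemma gradient_coupling_bound:
  "\<exists>\<xi>>0. \<forall>k. norm (dxq (x (Suc k)) (y (Suc k)) - dxq (x (Suc k)) (yh k)) \<le> \<xi> * norm (y (Suc k) - yh k)"
proof -
  let ?D1 = "range (\<lambda>k. x (Suc k))" and ?D2 = "range y \<union> range yh"
  have "?D1 \<subseteq> fst ` range z" by (auto simp: image_image)
  then have D1: "bounded ?D1" using bounded_fst[OF bounded_iterates(1)] by (rule bounded_subset[rotated])
  have "?D2 = snd ` range z \<union> snd ` range zh" by (simp add: image_image)
  then have D2: "bounded ?D2"
    using bounded_snd[OF bounded_iterates(1)] bounded_snd[OF bounded_iterates(2)] by simp
  have "h (x (Suc k)) \<noteq> \<infinity>" for k using iterate_in_edom_Q[of k] unfolding edom_Q_iff .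
  then have "?D1 \<times> ?D2 \<subseteq> edom Q" by (auto simp: edom_Q_iff)
  from dxq_lip[OF D1 D2 this] obtain \<xi> where "0 < \<xi>"
    and "\<forall>ub\<in>?D1. \<forall>v\<in>?D2. \<forall>vb\<in>?D2. norm (dxq ub v - dxq ub vb) \<le> \<xi> * norm (v - vb)"
    by blast
  then show ?thesis by (intro exI[of _ \<xi>]) auto
qed

lemma partial_subgradients:
  "(dphi1 (xh k) - dphi1 (x (Suc k)) - df (xh k) - dxq (x (Suc k)) (yh k) + dxq (x (Suc k)) (y (Suc k)),
    dphi2 (yh k) - dphi2 (y (Suc k)) - dg (yh k)) \<in> lim_subdiff Q (z (Suc k))"
proof -
  let ?a = "xh k" and ?b = "yh k" and ?x1 = "x (Suc k)" and ?y1 = "y (Suc k)"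
  have "h ?x1 \<noteq> \<infinity>" using iterate_in_edom_Q[of k] unfolding edom_Q_iff .
  then have Q_x1: "Q (?x1, v) \<noteq> \<infinity>" for v unfolding Q_finite_iff .
  have Q_partial: "(\<lambda>u. Q (u, v)) = (\<lambda>u. h u + ereal (q (u, v)))" for v
    by (rule ext, subst Q_split, rule add.commute)
  have "dphi1 ?a - dphi1 ?x1 - df ?a \<in> frechet_subdiff (\<lambda>u. Q (u, ?b)) ?x1"
    by (rule bregman_prox_step_subgradient[where \<Psi> = "\<lambda>u. Q (u, ?b)", OF phi1_grad Q_not_MInf Q_x1 step_x])
  then have "dphi1 ?a - dphi1 ?x1 - df ?a \<in> frechet_subdiff (\<lambda>u. h u + ereal (q (u, ?b))) ?x1"
    by (simp only: Q_partial)
  then have "dphi1 ?a - dphi1 ?x1 - df ?a - dxq ?x1 ?b + dxq ?x1 ?y1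
      \<in> frechet_subdiff (\<lambda>u. h u + ereal (q (u, ?y1))) ?x1"
    by (rule frechet_subdiff_change_smooth[OF _ h_not_MInf q_grad q_grad])
  then have "dphi1 ?a - dphi1 ?x1 - df ?a - dxq ?x1 ?b + dxq ?x1 ?y1 \<in> lim_subdiff (\<lambda>u. Q (u, ?y1)) ?x1"
    unfolding Q_partial by (rule frechet_subdiff_imp_lim_subdiff)
  moreover have "dphi2 ?b - dphi2 ?y1 - dg ?b \<in> lim_subdiff (\<lambda>v. Q (?x1, v)) ?y1"
    by (rule frechet_subdiff_imp_lim_subdiff, rule bregman_prox_step_subgradient[where \<Psi> = "\<lambda>v. Q (?x1, v)",
          OF phi2_grad Q_not_MInf Q_x1 step_y])
  ultimately show ?thesis
    using subsetD[OF partial_subdiff[OF iterate_in_edom_Q[of k]]] by simp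
qed

lemma relative_error_step:
  assumes "0 \<le> \<xi>"
    and \<xi>: "norm (dxq (x (Suc k)) (y (Suc k)) - dxq (x (Suc k)) (yh k)) \<le> \<xi> * norm (y (Suc k) - yh k)"
  shows "\<exists>w\<in>lim_subdiff L (z (Suc k)). norm w \<le> (Lf + \<eta>1 + \<xi> + Lg + \<eta>2) * norm (z (Suc k) - zh k)"
proof -
  let ?a = "xh k" and ?b = "yh k" and ?x1 = "x (Suc k)" and ?y1 = "y (Suc k)"
  let ?nx = "norm (?x1 - ?a)" and ?ny = "norm (?y1 - ?b)" and ?N = "norm (z (Suc k) - zh k)"
  define vx where "vx = dphi1 ?a - dphi1 ?x1 - df ?a - dxq ?x1 ?b + dxq ?x1 ?y1"
  define vy where "vy = dphi2 ?b - dphi2 ?y1 - dg ?b"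
  have L_fun: "L = (\<lambda>w. Q w + ereal (f (fst w) + g (snd w)))" by (rule ext) (rule L_eq)
  have "continuous_on UNIV (\<lambda>w. df (fst w))" "continuous_on UNIV (\<lambda>w. dg (snd w))"
    using continuous_on_compose2[OF lipschitz_on_continuous_on[OF df_lip] continuous_on_fst[OF continuous_on_id]]
      continuous_on_compose2[OF lipschitz_on_continuous_on[OF dg_lip] continuous_on_snd[OF continuous_on_id]]
    by simp_all
  then have "continuous_on UNIV (\<lambda>w. (df (fst w), dg (snd w)))" by (rule continuous_on_Pair)
  from lim_subdiff_add_smooth[OF partial_subgradients[of k, folded vx_def vy_def] Q_not_MInf
      has_derivative_fst_snd_sum[OF f_grad g_grad] this]
  have sub: "(vx, vy) + (df ?x1, dg ?y1) \<in> lim_subdiff L (z (Suc k))" unfolding L_fun by simp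
  have lip: "norm (df ?x1 - df ?a) \<le> Lf * ?nx" "norm (dphi1 ?a - dphi1 ?x1) \<le> \<eta>1 * ?nx"
    "norm (dg ?y1 - dg ?b) \<le> Lg * ?ny" "norm (dphi2 ?b - dphi2 ?y1) \<le> \<eta>2 * ?ny"
    using lipschitz_on_normD[OF df_lip, of ?x1 ?a] lipschitz_on_normD[OF dphi1_lip, of ?a ?x1]
      lipschitz_on_normD[OF dg_lip, of ?y1 ?b] lipschitz_on_normD[OF dphi2_lip, of ?b ?y1]
    by (simp_all add: norm_minus_commute)
  have "vx + df ?x1 = (df ?x1 - df ?a) + (dphi1 ?a - dphi1 ?x1) + (dxq ?x1 ?y1 - dxq ?x1 ?b)"
    unfolding vx_def by (simp add: algebra_simps)
  then have x_part: "norm (vx + df ?x1) \<le> Lf * ?nx + \<eta>1 * ?nx + \<xi> * ?ny"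
    using lip \<xi> norm_triangle_ineq[of "(df ?x1 - df ?a) + (dphi1 ?a - dphi1 ?x1)" "dxq ?x1 ?y1 - dxq ?x1 ?b"]
      norm_triangle_ineq[of "df ?x1 - df ?a" "dphi1 ?a - dphi1 ?x1"]
    by (simp only:; linarith)
  have "vy + dg ?y1 = (dg ?y1 - dg ?b) + (dphi2 ?b - dphi2 ?y1)"
    unfolding vy_def by (simp add: algebra_simps)
  then have y_part: "norm (vy + dg ?y1) \<le> Lg * ?ny + \<eta>2 * ?ny"
    using lip norm_triangle_ineq[of "dg ?y1 - dg ?b" "dphi2 ?b - dphi2 ?y1"]
    by (simp only:; linarith)
  have "?nx \<le> ?N" "?ny \<le> ?N"
    using norm_fst_le[of "?x1 - ?a" "?y1 - ?b"] norm_snd_le[of "?y1 - ?b" "?x1 - ?a"] by simp_all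
  then have "Lf * ?nx \<le> Lf * ?N" "\<eta>1 * ?nx \<le> \<eta>1 * ?N" "\<xi> * ?ny \<le> \<xi> * ?N"
    "Lg * ?ny \<le> Lg * ?N" "\<eta>2 * ?ny \<le> \<eta>2 * ?N"
    using lipschitz_on_nonneg[OF df_lip] lipschitz_on_nonneg[OF dphi1_lip] \<open>0 \<le> \<xi>\<close>
      lipschitz_on_nonneg[OF dg_lip] lipschitz_on_nonneg[OF dphi2_lip]
    by (simp_all add: mult_left_mono)
  moreover have "norm ((vx, vy) + (df ?x1, dg ?y1)) \<le> norm (vx + df ?x1) + norm (vy + dg ?y1)"
    using norm_Pair_le[of "vx + df ?x1" "vy + dg ?y1"] by simp
  moreover have "(Lf + \<eta>1 + \<xi> + Lg + \<eta>2) * ?N = Lf * ?N + \<eta>1 * ?N + \<xi> * ?N + Lg * ?N + \<eta>2 * ?N"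
    by (simp add: algebra_simps)
  ultimately have "norm ((vx, vy) + (df ?x1, dg ?y1)) \<le> (Lf + \<eta>1 + \<xi> + Lg + \<eta>2) * ?N"
    using x_part y_part by linarith
  with sub show ?thesis by blast
qed

lemma L_real_on_edom_Q:
  assumes "w \<in> edom Q"
  obtains r where "L w = ereal r"
proof -
  obtain r where "Q w = ereal r" using assms Q_not_MInf[of w] by (cases "Q w") (simp_all add: edom_def)
  then show ?thesis using that[of "r + (f (fst w) + g (snd w))"] L_eq[of w] by simp
qed

theorem iterates_finite_length_critical_limit:
  "summable (\<lambda>k. norm (z (Suc k) - z k)) \<and> (\<exists>zs. z \<longlonglongrightarrow> zs \<and> critical_point L zs)"
proof -
  obtain \<xi> where \<xi>: "0 < \<xi>"
    "\<And>k. norm (dxq (x (Suc k)) (y (Suc k)) - dxq (x (Suc k)) (yh k)) \<le> \<xi> * norm (y (Suc k) - yh k)"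
    using gradient_coupling_bound by blast
  have b_nonneg: "0 \<le> Lf + \<eta>1 + \<xi> + Lg + \<eta>2"
    using lipschitz_on_nonneg[OF df_lip] lipschitz_on_nonneg[OF dphi1_lip] \<xi>(1)
      lipschitz_on_nonneg[OF dg_lip] lipschitz_on_nonneg[OF dphi2_lip] by simp
  have L_real: "u \<in> edom Q \<Longrightarrow> L u = ereal (real_of_ereal (L u))" for u
    by (erule L_real_on_edom_Q) simp
  have "real_of_ereal (L (z (Suc (Suc k)))) + decrease_const * (norm (z (Suc (Suc k)) - zh (Suc k)))\<^sup>2
      \<le> real_of_ereal (L (z (Suc k)))" for k
  proof -
    obtain r1 r2 where "L (z (Suc k)) = ereal r1" "L (z (Suc (Suc k))) = ereal r2"
      using L_real_on_edom_Q[OF iterate_in_edom_Q] by metis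
    moreover have "L (z (Suc (Suc k))) + ereal (decrease_const * (norm (z (Suc (Suc k)) - zh (Suc k)))\<^sup>2)
        \<le> L (z (Suc k))"
      using sufficient_decrease_step[of "Suc k"] L_extrapolation_le[of k] by (rule order_trans)
    ultimately show ?thesis by simp
  qed
  moreover have "u \<in> edom Q \<Longrightarrow> KL_at L u" for u
    using L_KL edom_L unfolding KL_function_def by blast
  ultimately interpret inertial_KL_descent L "\<lambda>w. real_of_ereal (L w)" "edom Q" z zh decrease_const
      "Lf + \<eta>1 + \<xi> + Lg + \<eta>2" \<alpha>max \<beta>max
    using domQ_closed L_real continuous_on_real_L iterate_in_edom_Q bounded_iterates(1)
      decrease_const_pos b_nonneg relative_error_step[OF less_imp_le[OF \<xi>(1)] \<xi>(2)]
      extrapolation_dist_le \<alpha>max_nn \<beta>max_nn \<alpha>\<beta>_lt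
    by unfold_locales auto
  show ?thesis using finite_length_and_critical_limit unfolding critical_point_def by simp
qed

end

theorem theorem3p1:
  fixes f :: "'a::euclidean_space \<Rightarrow> real" and g :: "'b::euclidean_space \<Rightarrow> real"
    and Q :: "'a \<times> 'b \<Rightarrow> ereal" and L :: "'a \<times> 'b \<Rightarrow> ereal"
    and df :: "'a \<Rightarrow> 'a" and dg :: "'b \<Rightarrow> 'b"
    and Lf Lg :: real
    and phi1 :: "'a \<Rightarrow> real" and dphi1 :: "'a \<Rightarrow> 'a"
    and phi2 :: "'b \<Rightarrow> real" and dphi2 :: "'b \<Rightarrow> 'b"
    and \<theta>1 \<theta>2 \<eta>1 \<eta>2 :: real
    and q :: "'a \<times> 'b \<Rightarrow> real" and dxq :: "'a \<Rightarrow> 'b \<Rightarrow> 'a" and h :: "'a \<Rightarrow> ereal"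
    and x xh :: "nat \<Rightarrow> 'a" and y yh :: "nat \<Rightarrow> 'b"
    and xm1 :: 'a and ym1 :: 'b
    and \<alpha> \<beta> :: "nat \<Rightarrow> real" and \<alpha>max \<beta>max :: real
  assumes L_def: "\<And>z. L z = ereal (f (fst z)) + Q z + ereal (g (snd z))"
    \<comment> \<open>(A1)\<close>
    and L_bdd: "bounded_below_fun L"
    and f_grad: "\<And>u. (f has_derivative (\<lambda>d. df u \<bullet> d)) (at u)"
    and g_grad: "\<And>v. (g has_derivative (\<lambda>d. dg v \<bullet> d)) (at v)"
    and df_cont: "continuous_on UNIV df" and dg_cont: "continuous_on UNIV dg"
    and df_lip: "Lf-lipschitz_on UNIV df" and dg_lip: "Lg-lipschitz_on UNIV dg"
    and Q_proper: "proper_fun Q" and Q_lsc: "lsc Q"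
    and phi1_grad: "\<And>u. (phi1 has_derivative (\<lambda>d. dphi1 u \<bullet> d)) (at u)"
    and phi2_grad: "\<And>v. (phi2 has_derivative (\<lambda>d. dphi2 v \<bullet> d)) (at v)"
    and phi1_sc: "strongly_convex \<theta>1 phi1" and phi2_sc: "strongly_convex \<theta>2 phi2"
    and \<theta>1_gt: "\<theta>1 > Lf" and \<theta>2_gt: "\<theta>2 > Lg"
    and dphi1_lip: "\<eta>1-lipschitz_on UNIV dphi1" and dphi2_lip: "\<eta>2-lipschitz_on UNIV dphi2"
    \<comment> \<open>(A2)\<close>
    and L_coercive: "coercive L"
    and domQ_closed: "closed (edom Q)"
    and partial_subdiff: "\<And>u v. (u, v) \<in> edom Q \<Longrightarrow>
          lim_subdiff (\<lambda>u'. Q (u', v)) u \<times> lim_subdiff (\<lambda>v'. Q (u, v')) v \<subseteq> lim_subdiff Q (u, v)"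
    and Q_split: "\<And>u v. Q (u, v) = ereal (q (u, v)) + h u"
    and h_cont: "continuous_on (edom h) h"
    and q_cont: "continuous_on (edom Q) q"
    and q_grad: "\<And>u v. ((\<lambda>u'. q (u', v)) has_derivative (\<lambda>d. dxq u v \<bullet> d)) (at u)"
    and dxq_cont: "\<And>v. continuous_on UNIV (\<lambda>u. dxq u v)"
    and dxq_lip: "\<And>D1 D2. bounded D1 \<Longrightarrow> bounded D2 \<Longrightarrow> D1 \<times> D2 \<subseteq> edom Q \<Longrightarrow>
          \<exists>\<xi>>0. \<forall>ub\<in>D1. \<forall>v\<in>D2. \<forall>vb\<in>D2. norm (dxq ub v - dxq ub vb) \<le> \<xi> * norm (v - vb)"
    \<comment> \<open>KL\<close>
    and L_KL: "KL_function L"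
    \<comment> \<open>algorithm parameters\<close>
    and \<alpha>max_nn: "0 \<le> \<alpha>max" and \<beta>max_nn: "0 \<le> \<beta>max" and \<alpha>\<beta>_lt: "\<alpha>max + \<beta>max < 1"
    and \<alpha>_range: "\<And>k. \<alpha> k \<in> {0..\<alpha>max}" and \<beta>_range: "\<And>k. \<beta> k \<in> {0..\<beta>max}"
    \<comment> \<open>algorithm\<close>
    and init: "xh 0 = x 0" "yh 0 = y 0"
    and step_x: "\<And>k. is_arg_min
          (\<lambda>u. Q (u, yh k) + ereal (df (xh k) \<bullet> u) + ereal (bregman phi1 dphi1 u (xh k)))
          (\<lambda>_. True) (x (Suc k))"
    and step_y: "\<And>k. is_arg_min
          (\<lambda>v. Q (x (Suc k), v) + ereal (dg (yh k) \<bullet> v) + ereal (bregman phi2 dphi2 v (yh k)))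
          (\<lambda>_. True) (y (Suc k))"
    and step_hat: "\<And>k.
          let xp = (if k = 0 then xm1 else x (k - 1));
              yp = (if k = 0 then ym1 else y (k - 1));
              u = x (Suc k) + \<alpha> k *\<^sub>R (x (Suc k) - x k) + \<beta> k *\<^sub>R (x k - xp);
              v = y (Suc k) + \<alpha> k *\<^sub>R (y (Suc k) - y k) + \<beta> k *\<^sub>R (y k - yp)
          in (xh (Suc k), yh (Suc k)) =
             (if L (u, v) \<le> L (x (Suc k), y (Suc k)) then (u, v) else (x (Suc k), y (Suc k)))"
  shows "summable (\<lambda>k. norm ((x (Suc k), y (Suc k)) - (x k, y k))) \<and>
         (\<exists>zs. (\<lambda>k. (x k, y k)) \<longlonglongrightarrow> zs \<and> critical_point L zs)"
proof -
  \<comment> \<open>Not needed: \<open>L_bdd\<close> (a cluster point bounds the values from below), \<open>Q_lsc\<close> (\<open>L\<close> is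
    continuous on the closed set \<open>edom Q\<close>), \<open>df_cont\<close> and \<open>dg_cont\<close> (implied by Lipschitz
    continuity), \<open>dxq_cont\<close> and \<open>init\<close>.\<close>
  interpret inertial_alternating_bregman f g Q L df dg Lf Lg phi1 dphi1 phi2 dphi2 \<theta>1 \<theta>2 \<eta>1 \<eta>2
      q dxq h x xh y yh xm1 ym1 \<alpha> \<beta> \<alpha>max \<beta>max
    by unfold_locales (fact assms)+
  show ?thesis by (rule iterates_finite_length_critical_limit)
qed

end
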